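(* Assume (A1)–(A4) below and $a<0$. Let $(w_j)_{j\in\mathbb{N}}$ be the unique real sequence with $w_0=\dots=w_{r-1}=-1$, $\sum_{\ell=-r}^pa_\ell w_{j+\ell+r}=0$ for all $j\ge0$, and $w_j\to0$. Then there exists a unique sequence $(\widetilde w_j)_{j\in\mathbb{N}}$ such that - $\sum_{\ell=-r}^pa_\ell\widetilde w_{j+\ell}+w_j=0$ for all $j\ge r$; - $\widetilde w_0=\dots=\widetilde w_{r-1}=0$; - $\widetilde w_j\to0$ as $j\to\infty$. Moreover, $(\widetilde w_j)$ decays exponentially fast at infinity.
   Context: Fix the following data: - a real number $a\neq0$; - nonnegative integers $p,r$ and real coefficients $a_{-r},\dots,a_p$ with $a_{-r}\neq0$ and $a_p\neq0$; - an integer $k\ge1$ and real coefficients $\alpha_0,\dots,\alpha_k$, $\beta_0,\dots,\beta_{k-1}$ with $\alpha_k=1$ and $|\alpha_0|+|\beta_0|>0$; - a fixed ratio $\lambda>0$. For $\Delta t\in(0,1]$ set $\Delta x=\Delta t/\lambda$. Let $\mathcal A(z)=\sum_{\ell=-r}^p a_\ell z^\ell$ for $z\in\mathbb{C}\setminus\{0\}$. Assumptions: (A1) $\sum_{\ell=-r}^p a_\ell=0$ and $\sum_{\ell=-r}^p\ell a_\ell=a$. (A2) $\sum_{\sigma=0}^k\alpha_\sigma=0$ and $\sum_{\sigma=0}^k\sigma\alpha_\sigma=\sum_{\sigma=0}^{k-1}\beta_\sigma$. (A3) There is $C>0$ such that for all $\Delta t\in(0,1]$, every solution $(u_j^n)_{j\in\mathbb{Z},n\in\mathbb{N}}$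 of $\sum_{\sigma=0}^k\alpha_\sigma u_j^{n+\sigma}+\lambda\sum_{\sigma=0}^{k-1}\beta_\sigma\sum_{\ell=-r}^pa_\ell u_{j+\ell}^{n+\sigma}=0$ ($j\in\mathbb{Z}$, $n\in\mathbb{N}$) satisfies $\sup_{n}\sum_{j\in\mathbb{Z}}\Delta x|u_j^n|^2\le C\sum_{\sigma=0}^{k-1}\sum_{j\in\mathbb{Z}}\Delta x|u_j^\sigma|^2$. (A4) $\mathcal A(e^{i\theta})\neq0$ for all $\theta\in[-\pi,\pi]\setminus\{0\}$. Under these assumptions with $a<0$, the sequence $(w_j)$ exists, is unique, and decays exponentially. *)

theory Defs
  imports "HOL-Analysis.Analysis"
begin

definition symbolA :: "nat \<Rightarrow> nat \<Rightarrow> (int \<Rightarrow> real) \<Rightarrow> complex \<Rightarrow> complex" where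
  "symbolA p r c z = (\<Sum>l\<in>{- int r..int p}. complex_of_real (c l) * z powi l)"

definition scheme_solution ::
  "nat \<Rightarrow> nat \<Rightarrow> (int \<Rightarrow> real) \<Rightarrow> nat \<Rightarrow> (nat \<Rightarrow> real) \<Rightarrow> (nat \<Rightarrow> real) \<Rightarrow> real
   \<Rightarrow> (int \<Rightarrow> nat \<Rightarrow> complex) \<Rightarrow> bool" where
  "scheme_solution p r c k alpha beta lam u \<longleftrightarrow>
     (\<forall>j n. (\<Sum>s\<le>k. complex_of_real (alpha s) * u j (n + s))
            + complex_of_real lam * (\<Sum>s<k. complex_of_real (beta s) *
                 (\<Sum>l\<in>{- int r..int p}. complex_of_real (c l) * u (j + l) (n + s))) = 0)"

text \<open>(A3): l^2-stability, uniformly in dt in (0,1], dx = dt/lam.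
  The supremum bound is rendered as: whenever the right-hand side is finite
  (initial data square summable), every time level is square summable and
  its weighted l^2 norm is bounded by C times the initial one.\<close>
definition l2_stable ::
  "nat \<Rightarrow> nat \<Rightarrow> (int \<Rightarrow> real) \<Rightarrow> nat \<Rightarrow> (nat \<Rightarrow> real) \<Rightarrow> (nat \<Rightarrow> real) \<Rightarrow> real \<Rightarrow> bool" where
  "l2_stable p r c k alpha beta lam \<longleftrightarrow>
     (\<exists>C>0. \<forall>dt\<in>{0<..1::real}. \<forall>u.
        scheme_solution p r c k alpha beta lam u \<longrightarrow>
        (\<forall>s<k. (\<lambda>j. (dt / lam) * (norm (u j s))\<^sup>2) summable_on UNIV) \<longrightarrow>
        (\<forall>n. (\<lambda>j. (dt / lam) * (norm (u j n))\<^sup>2) summable_on UNIV \<and>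
             (\<Sum>\<^sub>\<infinity>j. (dt / lam) * (norm (u j n))\<^sup>2)
               \<le> C * (\<Sum>s<k. \<Sum>\<^sub>\<infinity>j. (dt / lam) * (norm (u j s))\<^sup>2)))"

end

theory Submission
  imports Defs "HOL-Complex_Analysis.Complex_Analysis"
    "HOL-Computational_Algebra.Fundamental_Theorem_Algebra"
begin

text \<open>Write \<open>P(z) = z\<^sup>r A(z)\<close>, a polynomial of degree \<open>p + r\<close>. A decaying solution of
  \<open>\<Sum>\<^sub>l a\<^sub>l x\<^sub>j\<^sub>+\<^sub>l = f\<^sub>j\<close> is governed by the roots of \<open>P\<close> in the open unit disc: after factoring
  \<open>P\<close> into linear factors, those with roots outside the disc are inverted on exponentially
  decaying data by backward summation, those with roots inside by forward recursion, which needs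
  one initial value per root. So everything reduces to showing that \<open>P\<close> has exactly \<open>r\<close> roots
  in the unit disc.

  Count the roots of \<open>P - M z\<^sup>r\<close> in the disc. By Rouche's theorem there are \<open>r\<close> of them for
  \<open>|M|\<close> large, and the count is locally constant as long as \<open>M\<close> avoids the curve \<open>A(S\<^sup>1)\<close>.
  For \<open>M = -t\<close>, \<open>t > 0\<close> small, it equals the count for \<open>P\<close>: the only root of \<open>P\<close> on the circle is
  the simple root \<open>1\<close>, and since \<open>a = P'(1) < 0\<close> it moves out of the disc. To connect the two
  regimes, note that \<open>l\<^sup>2\<close>-stability, tested on truncated plane waves, gives the von Neumann
  condition \<open>\<rho>(\<tau>) + \<lambda>\<sigma>(\<tau>)A(\<kappa>) \<noteq> 0\<close> for \<open>|\<tau>| > 1 = |\<kappa>|\<close>. Hence \<open>M(\<tau>) = -\<rho>(\<tau>)/(\<lambda>\<sigma>(\<tau>))\<close>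
  avoids \<open>A(S\<^sup>1)\<close> on the connected set \<open>|\<tau>| > 1\<close> (minus the roots of \<open>\<sigma>\<close>), and along the real
  axis it is large for large \<open>\<tau>\<close> and, by consistency, small and negative for \<open>\<tau>\<close> near \<open>1\<close>.\<close>


section \<open>Finite speed of propagation and instability\<close>

lemma infsum_finite_support_le:
  fixes f :: "int \<Rightarrow> real"
  assumes supp: "\<And>j. \<bar>j\<bar> > int N \<Longrightarrow> f j = 0" and le: "\<And>j. f j \<le> b"
  shows "f summable_on UNIV \<and> infsum f UNIV \<le> real (2 * N + 1) * b"
proof -
  have "f summable_on UNIV \<longleftrightarrow> f summable_on {- int N..int N}"
    by (rule summable_on_cong_neutral) (auto simp: supp)
  moreover have "infsum f UNIV = (\<Sum>j\<in>{- int N..int N}. f j)"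
    by (subst infsum_cong_neutral[of "{- int N..int N}"]) (auto simp: supp)
  moreover have "(\<Sum>j\<in>{- int N..int N}. f j) \<le> real (2 * N + 1) * b"
    using sum_mono[of "{- int N..int N}" f "\<lambda>_. b"] le by (simp add: algebra_simps)
  ultimately show ?thesis by simp
qed

context
  fixes p r :: nat and c :: "int \<Rightarrow> real" and k :: nat and alpha beta :: "nat \<Rightarrow> real"
    and lam :: real
begin

text \<open>The scheme as a map on windows \<open>W s\<close>, \<open>s < k\<close>, of \<open>k\<close> consecutive time levels:
  \<open>evolve W0\<close> is the solution whose first \<open>k\<close> levels are given by \<open>W0\<close>.\<close>

definition next_level :: "(nat \<Rightarrow> int \<Rightarrow> complex) \<Rightarrow> int \<Rightarrow> complex" where
  "next_level W j = - (\<Sum>s<k. complex_of_real (alpha s) * W s j) - complex_of_real lam *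
     (\<Sum>s<k. complex_of_real (beta s) * (\<Sum>l\<in>{- int r..int p}. complex_of_real (c l) * W s (j + l)))"

definition shift_window :: "(nat \<Rightarrow> int \<Rightarrow> complex) \<Rightarrow> nat \<Rightarrow> int \<Rightarrow> complex" where
  "shift_window W = (\<lambda>s j. if Suc s < k then W (Suc s) j else next_level W j)"

definition evolve :: "(nat \<Rightarrow> int \<Rightarrow> complex) \<Rightarrow> int \<Rightarrow> nat \<Rightarrow> complex" where
  "evolve W0 j n = (shift_window ^^ n) W0 0 j"

lemma funpow_shift_window_first: "s < k \<Longrightarrow> (shift_window ^^ s) W 0 = W s"
proof (induction s arbitrary: W)
  case (Suc s)
  have "(shift_window ^^ Suc s) W 0 = (shift_window ^^ s) (shift_window W) 0"
    by (simp add: funpow_Suc_right del: funpow.simps)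
  also have "\<dots> = shift_window W s" using Suc by simp
  also have "\<dots> = W (Suc s)" using Suc.prems by (simp add: shift_window_def)
  finally show ?case .
qed simp

lemma evolve_window: "s < k \<Longrightarrow> evolve W0 j (n + s) = (shift_window ^^ n) W0 s j"
  unfolding evolve_def by (simp add: funpow_add add.commute[of n s] funpow_shift_window_first)

lemma evolve_next_level:
  assumes "k \<ge> 1"
  shows "evolve W0 j (n + k) = next_level ((shift_window ^^ n) W0) j"
proof -
  obtain m where k: "k = Suc m" using assms by (cases k) auto
  have "(shift_window ^^ k) W 0 = next_level W" for W
  proof -
    have "(shift_window ^^ k) W 0 = (shift_window ^^ m) (shift_window W) 0"
      by (simp add: k funpow_Suc_right del: funpow.simps)
    also have "\<dots> = shift_window W m" using k funpow_shift_window_first by simp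
    also have "\<dots> = next_level W" unfolding shift_window_def using k by simp
    finally show ?thesis .
  qed
  then show ?thesis unfolding evolve_def by (simp add: funpow_add add.commute[of n k])
qed

lemma scheme_solution_evolve:
  assumes "k \<ge> 1" "alpha k = 1"
  shows "scheme_solution p r c k alpha beta lam (evolve W0)"
  unfolding scheme_solution_def
proof (intro allI)
  fix j n
  let ?W = "(shift_window ^^ n) W0"
  have "(\<Sum>s\<le>k. complex_of_real (alpha s) * evolve W0 j (n + s))
        = (\<Sum>s<k. complex_of_real (alpha s) * ?W s j) + next_level ?W j"
    using assms evolve_next_level[of W0 j n]
    by (simp add: lessThan_Suc_atMost[symmetric] evolve_window)
  moreover have "(\<Sum>s<k. complex_of_real (beta s) *
                 (\<Sum>l\<in>{- int r..int p}. complex_of_real (c l) * evolve W0 (j + l) (n + s)))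
      = (\<Sum>s<k. complex_of_real (beta s) *
                 (\<Sum>l\<in>{- int r..int p}. complex_of_real (c l) * ?W s (j + l)))"
    by (intro sum.cong refl) (simp add: evolve_window)
  ultimately show "(\<Sum>s\<le>k. complex_of_real (alpha s) * evolve W0 j (n + s)) +
       complex_of_real lam * (\<Sum>s<k. complex_of_real (beta s) *
                 (\<Sum>l\<in>{- int r..int p}. complex_of_real (c l) * evolve W0 (j + l) (n + s))) = 0"
    by (simp add: next_level_def)
qed

lemma next_level_cong:
  assumes "\<And>s l. s < k \<Longrightarrow> l \<in> {- int r..int p} \<Longrightarrow> W s (j + l) = W' s (j + l)"
  shows "next_level W j = next_level W' j"
  unfolding next_level_def using assms[of _ 0]
  by (intro arg_cong2[where f="(-)"] arg_cong[where f=uminus] arg_cong2[where f="(*)"] sum.cong refl)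
    (auto simp: assms)

lemma next_level_scheme_solution:
  assumes "alpha k = 1" and "scheme_solution p r c k alpha beta lam v"
  shows "next_level (\<lambda>s j. v j (m + s)) j = v j (m + k)"
proof -
  have "(\<Sum>s\<le>k. complex_of_real (alpha s) * v j (m + s)) + complex_of_real lam *
      (\<Sum>s<k. complex_of_real (beta s) *
        (\<Sum>l\<in>{- int r..int p}. complex_of_real (c l) * v (j + l) (m + s))) = 0"
    using assms(2) unfolding scheme_solution_def by blast
  then have "(\<Sum>s<k. complex_of_real (alpha s) * v j (m + s)) + v j (m + k) + complex_of_real lam *
      (\<Sum>s<k. complex_of_real (beta s) *
        (\<Sum>l\<in>{- int r..int p}. complex_of_real (c l) * v (j + l) (m + s))) = 0"
    using assms(1) by (simp add: lessThan_Suc_atMost[symmetric])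
  then show ?thesis unfolding next_level_def by algebra
qed

text \<open>Each time step widens the domain of dependence by at most \<open>p + r\<close> cells.\<close>

lemma evolve_eq_on_cone:
  assumes k1: "k \<ge> 1" and ak: "alpha k = 1" and v: "scheme_solution p r c k alpha beta lam v"
    and W0: "\<And>s j. s < k \<Longrightarrow> \<bar>j\<bar> + int (s * (p + r + 1)) \<le> N \<Longrightarrow> W0 s j = v j s"
  shows "\<bar>j\<bar> + int (n * (p + r + 1)) \<le> N \<Longrightarrow> evolve W0 j n = v j n"
proof (induction n arbitrary: j rule: less_induct)
  case (less n)
  show ?case
  proof (cases "n < k")
    case True
    then show ?thesis using evolve_window[of n W0 j 0] W0[of n j] less.prems by simp
  next
    case False
    then obtain m where n: "n = m + k" by (metis add.commute le_add_diff_inverse not_less)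
    have "(shift_window ^^ m) W0 s (j + l) = v (j + l) (m + s)"
      if s: "s < k" and l: "l \<in> {- int r..int p}" for s l
    proof -
      have "(m + s) * (p + r + 1) + (p + r + 1) \<le> n * (p + r + 1)"
        using n s mult_le_mono1[of "m + s + 1" n "p + r + 1"] by (simp add: algebra_simps)
      then have "int ((m + s) * (p + r + 1)) + int (p + r + 1) \<le> int (n * (p + r + 1))"
        by (metis of_nat_add of_nat_le_iff)
      moreover have "\<bar>j + l\<bar> \<le> \<bar>j\<bar> + int (p + r)" using l by (auto simp: abs_if)
      ultimately have "\<bar>j + l\<bar> + int ((m + s) * (p + r + 1)) \<le> N" using less.prems by linarith
      then show ?thesis using less.IH[of "m + s"] evolve_window[OF s] n s by simp
    qed
    then have "next_level ((shift_window ^^ m) W0) j = next_level (\<lambda>s j. v j (m + s)) j"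
      by (rule next_level_cong)
    then show ?thesis using evolve_next_level[OF k1] next_level_scheme_solution[OF ak v] n by simp
  qed
qed

lemma truncated_solution:
  assumes k1: "k \<ge> 1" and ak: "alpha k = 1" and v: "scheme_solution p r c k alpha beta lam v"
  obtains u where "scheme_solution p r c k alpha beta lam u"
    "\<And>j. \<bar>j\<bar> \<le> int M \<Longrightarrow> u j n = v j n"
    "\<And>s j. s < k \<Longrightarrow> \<bar>j\<bar> > int (M + n * (p + r + 1)) \<Longrightarrow> u j s = 0"
    "\<And>s j. s < k \<Longrightarrow> norm (u j s) \<le> norm (v j s)"
proof -
  define W0 where "W0 = (\<lambda>s j. if \<bar>j\<bar> + int (s * (p + r + 1)) \<le> int (M + n * (p + r + 1))
    then v j s else 0)"
  have init: "evolve W0 j s = W0 s j" if "s < k" for j s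
    using evolve_window[OF that, of W0 j 0] by simp
  show ?thesis
  proof (rule that[of "evolve W0"])
    show "scheme_solution p r c k alpha beta lam (evolve W0)" by (rule scheme_solution_evolve[OF k1 ak])
    show "evolve W0 j n = v j n" if "\<bar>j\<bar> \<le> int M" for j
      using that by (intro evolve_eq_on_cone[OF k1 ak v]) (auto simp: W0_def)
    show "evolve W0 j s = 0" if "s < k" "\<bar>j\<bar> > int (M + n * (p + r + 1))" for s j
    proof -
      have "\<not> \<bar>j\<bar> + int (s * (p + r + 1)) \<le> int (M + n * (p + r + 1))" using that by linarith
      then show ?thesis unfolding init[OF that(1)] by (simp add: W0_def)
    qed
    show "norm (evolve W0 j s) \<le> norm (v j s)" if "s < k" for s j
      unfolding init[OF that] by (simp add: W0_def)
  qed
qed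

text \<open>A solution with \<open>|v j n| = G n\<close> and unbounded \<open>G\<close> contradicts stability: truncating its
  initial levels to \<open>|j| \<le> 2M\<close>, \<open>M = n (p + r + 1)\<close>, changes nothing on \<open>|j| \<le> M\<close> at
  level \<open>n\<close>, so \<open>(2M + 1) G n\<^sup>2 \<le> C (4M + 1) \<Sum>s<k. G s\<^sup>2\<close>.\<close>

lemma l2_stable_uniform_modulus_bounded:
  assumes k1: "k \<ge> 1" and ak: "alpha k = 1" and lam: "lam > 0"
    and st: "l2_stable p r c k alpha beta lam"
    and v: "scheme_solution p r c k alpha beta lam v" and G: "\<And>j n. norm (v j n) = G n"
  shows "\<exists>B. \<forall>n. G n \<le> B"
proof -
  obtain C where C: "C > 0" and stable: "\<And>u. scheme_solution p r c k alpha beta lam u \<Longrightarrow>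
        (\<forall>s<k. (\<lambda>j. (1 / lam) * (norm (u j s))\<^sup>2) summable_on UNIV) \<Longrightarrow>
        (\<forall>n. (\<lambda>j. (1 / lam) * (norm (u j n))\<^sup>2) summable_on UNIV \<and>
             (\<Sum>\<^sub>\<infinity>j. (1 / lam) * (norm (u j n))\<^sup>2)
               \<le> C * (\<Sum>s<k. \<Sum>\<^sub>\<infinity>j. (1 / lam) * (norm (u j s))\<^sup>2))"
    using st unfolding l2_stable_def by (metis greaterThanAtMost_iff less_numeral_extra(1) order_refl)
  define K where "K = (\<Sum>s<k. (G s)\<^sup>2)"
  have K0: "K \<ge> 0" unfolding K_def by (intro sum_nonneg) simp
  have "(G n)\<^sup>2 \<le> 2 * C * K" for n
  proof -
    define M where "M = n * (p + r + 1)"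
    obtain u where u: "scheme_solution p r c k alpha beta lam u"
      and u_agree: "\<And>j. \<bar>j\<bar> \<le> int M \<Longrightarrow> u j n = v j n"
      and u_supp: "\<And>s j. s < k \<Longrightarrow> \<bar>j\<bar> > int (2 * M) \<Longrightarrow> u j s = 0"
      and u_le: "\<And>s j. s < k \<Longrightarrow> norm (u j s) \<le> norm (v j s)"
      using truncated_solution[OF k1 ak v, of M n] by (metis M_def mult_2)
    define f where "f = (\<lambda>s j. (1 / lam) * (norm (u j s))\<^sup>2)"
    have f_init: "f s summable_on UNIV \<and> infsum (f s) UNIV \<le> real (2 * (2 * M) + 1) * ((G s)\<^sup>2 / lam)"
      if s: "s < k" for s
    proof (rule infsum_finite_support_le)
      show "f s j = 0" if "\<bar>j\<bar> > int (2 * M)" for j using u_supp[OF s that] by (simp add: f_def)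
      show "f s j \<le> (G s)\<^sup>2 / lam" for j
        using u_le[OF s, of j] lam by (simp add: f_def G divide_right_mono power_mono)
    qed
    have "f n summable_on UNIV \<and> infsum (f n) UNIV \<le> C * (\<Sum>s<k. infsum (f s) UNIV)"
      using stable[OF u] f_init by (simp add: f_def)
    moreover have "(\<Sum>j\<in>{- int M..int M}. f n j) = real (2 * M + 1) * ((G n)\<^sup>2 / lam)"
      by (subst sum.cong[OF refl, where h="\<lambda>_. (G n)\<^sup>2 / lam"]) (auto simp: f_def u_agree G)
    ultimately have "real (2 * M + 1) * ((G n)\<^sup>2 / lam) \<le> C * (\<Sum>s<k. infsum (f s) UNIV)"
      using finite_sum_le_infsum[of "f n" UNIV "{- int M..int M}"] lam by (force simp: f_def)
    also have "\<dots> \<le> C * (\<Sum>s<k. real (2 * (2 * M) + 1) * ((G s)\<^sup>2 / lam))"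
      using f_init C by (intro mult_left_mono sum_mono) auto
    also have "\<dots> \<le> C * (\<Sum>s<k. real (2 * (2 * M + 1)) * ((G s)\<^sup>2 / lam))"
      using C lam by (intro mult_left_mono sum_mono mult_right_mono) auto
    also have "\<dots> = C * (2 * real (2 * M + 1) * (K / lam))"
      by (simp add: K_def sum_distrib_left sum_divide_distrib)
    finally have "real (2 * M + 1) * ((G n)\<^sup>2 / lam) \<le> real (2 * M + 1) * (2 * C * K / lam)"
      by (simp add: algebra_simps add_divide_distrib)
    then have "(G n)\<^sup>2 / lam \<le> 2 * C * K / lam" by (rule mult_left_le_imp_le) simp
    then show ?thesis using lam by (simp add: divide_le_cancel)
  qed
  then show ?thesis by (metis real_le_rsqrt abs_le_square_iff abs_ge_self order_trans)
qed

end

section \<open>The von Neumann condition\<close>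

definition rho_poly :: "nat \<Rightarrow> (nat \<Rightarrow> real) \<Rightarrow> 'a::real_field poly" where
  "rho_poly k alpha = (\<Sum>s\<le>k. monom (of_real (alpha s)) s)"

definition sigma_poly :: "nat \<Rightarrow> (nat \<Rightarrow> real) \<Rightarrow> 'a::real_field poly" where
  "sigma_poly k beta = (\<Sum>s<k. monom (of_real (beta s)) s)"

lemma poly_rho_poly: "poly (rho_poly k alpha) z = (\<Sum>s\<le>k. of_real (alpha s) * z ^ s)"
  by (simp add: rho_poly_def poly_sum poly_monom)

lemma poly_sigma_poly: "poly (sigma_poly k beta) z = (\<Sum>s<k. of_real (beta s) * z ^ s)"
  by (simp add: sigma_poly_def poly_sum poly_monom)

lemma poly_rho_poly_of_real:
  "poly (rho_poly k alpha) (of_real x :: 'a::real_field) = of_real (poly (rho_poly k alpha) x)"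
  by (simp add: poly_rho_poly)

lemma poly_sigma_poly_of_real:
  "poly (sigma_poly k beta) (of_real x :: 'a::real_field) = of_real (poly (sigma_poly k beta) x)"
  by (simp add: poly_sigma_poly)

lemma scheme_solution_plane_wave:
  assumes "\<kappa> \<noteq> 0"
    and "poly (rho_poly k alpha) \<tau> + of_real lam * poly (sigma_poly k beta) \<tau> * symbolA p r c \<kappa> = 0"
  shows "scheme_solution p r c k alpha beta lam (\<lambda>j n. \<tau> ^ n * \<kappa> powi j)"
  unfolding scheme_solution_def
proof (intro allI)
  fix j n
  have space: "(\<Sum>l\<in>{- int r..int p}. of_real (c l) * (\<tau> ^ (n + s) * \<kappa> powi (j + l)))
      = \<tau> ^ (n + s) * \<kappa> powi j * symbolA p r c \<kappa>" for s
    unfolding symbolA_def sum_distrib_left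
    by (intro sum.cong refl) (simp add: power_int_add assms(1) algebra_simps)
  have "(\<Sum>s\<le>k. of_real (alpha s) * (\<tau> ^ (n + s) * \<kappa> powi j)) + of_real lam *
      (\<Sum>s<k. of_real (beta s) * (\<tau> ^ (n + s) * \<kappa> powi j * symbolA p r c \<kappa>))
    = \<tau> ^ n * \<kappa> powi j * (poly (rho_poly k alpha) \<tau> +
        of_real lam * poly (sigma_poly k beta) \<tau> * symbolA p r c \<kappa>)"
    by (simp add: poly_rho_poly poly_sigma_poly sum_distrib_left sum_distrib_right power_add
        algebra_simps)
  then show "(\<Sum>s\<le>k. of_real (alpha s) * (\<tau> ^ (n + s) * \<kappa> powi j)) + of_real lam *
      (\<Sum>s<k. of_real (beta s) *
        (\<Sum>l\<in>{- int r..int p}. of_real (c l) * (\<tau> ^ (n + s) * \<kappa> powi (j + l)))) = 0"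
    using assms(2) by (simp add: space)
qed

lemma l2_stable_von_Neumann:
  assumes "k \<ge> 1" "alpha k = 1" "lam > 0" "l2_stable p r c k alpha beta lam"
    and "norm \<kappa> = 1" and "norm \<tau> > 1"
  shows "poly (rho_poly k alpha) \<tau> + of_real lam * poly (sigma_poly k beta) \<tau> * symbolA p r c \<kappa> \<noteq> 0"
proof
  assume "poly (rho_poly k alpha) \<tau> + of_real lam * poly (sigma_poly k beta) \<tau> * symbolA p r c \<kappa> = 0"
  then have "scheme_solution p r c k alpha beta lam (\<lambda>j n. \<tau> ^ n * \<kappa> powi j)"
    using \<open>norm \<kappa> = 1\<close> by (intro scheme_solution_plane_wave) auto
  moreover have "norm (\<tau> ^ n * \<kappa> powi j) = norm \<tau> ^ n" for j n
    using \<open>norm \<kappa> = 1\<close> by (simp add: norm_mult norm_power norm_power_int)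
  ultimately obtain B where "\<forall>n. norm \<tau> ^ n \<le> B"
    using l2_stable_uniform_modulus_bounded assms(1-4) by blast
  then show False using real_arch_pow[OF \<open>norm \<tau> > 1\<close>, of B] by (meson leD)
qed

text \<open>If \<open>\<sigma>(1) = 0\<close>, consistency makes the unbounded \<open>u j n = n\<close> a solution.\<close>

lemma l2_stable_sum_beta_nonzero:
  assumes "k \<ge> 1" "alpha k = 1" "lam > 0" "l2_stable p r c k alpha beta lam"
    and A1a: "(\<Sum>l\<in>{- int r..int p}. c l) = 0"
    and A2a: "(\<Sum>s\<le>k. alpha s) = 0"
    and A2b: "(\<Sum>s\<le>k. of_nat s * alpha s) = (\<Sum>s<k. beta s)"
  shows "(\<Sum>s<k. beta s) \<noteq> 0"
proof
  assume beta0: "(\<Sum>s<k. beta s) = 0"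
  have "scheme_solution p r c k alpha beta lam (\<lambda>j n. of_nat n)"
    unfolding scheme_solution_def
  proof (intro allI)
    fix j :: int and n :: nat
    have "(\<Sum>l\<in>{- int r..int p}. complex_of_real (c l) * of_nat (n + s)) = 0" for s
      using A1a by (simp flip: sum_distrib_right of_real_sum)
    moreover have "(\<Sum>s\<le>k. complex_of_real (alpha s) * of_nat (n + s))
        = of_real ((\<Sum>s\<le>k. alpha s) * of_nat n + (\<Sum>s\<le>k. of_nat s * alpha s))"
      by (simp add: sum_distrib_right sum_distrib_left sum.distrib algebra_simps)
    ultimately show "(\<Sum>s\<le>k. complex_of_real (alpha s) * of_nat (n + s)) + complex_of_real lam *
        (\<Sum>s<k. complex_of_real (beta s) *
          (\<Sum>l\<in>{- int r..int p}. complex_of_real (c l) * of_nat (n + s))) = 0"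
      using A2a A2b beta0 by simp
  qed
  then obtain B where "\<forall>n. real n \<le> B"
    using l2_stable_uniform_modulus_bounded[of k alpha lam p r c beta "\<lambda>j n. of_nat n" real]
      assms(1-4) by auto
  then show False using reals_Archimedean2[of B] by (meson leD)
qed

section \<open>Roots in a disc and the symbol polynomial\<close>

definition roots_in_disc :: "real \<Rightarrow> complex poly \<Rightarrow> nat" where
  "roots_in_disc R q = (\<Sum>z\<in>{z. poly q z = 0 \<and> norm z < R}. order z q)"

lemma size_proots_in_disc:
  assumes "q \<noteq> 0"
  shows "size (filter_mset (\<lambda>z. norm z < R) (proots q)) = roots_in_disc R q"
proof -
  have "size (filter_mset (\<lambda>z. norm z < R) (proots q))
      = (\<Sum>z\<in>set_mset (filter_mset (\<lambda>z. norm z < R) (proots q)).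
          count (filter_mset (\<lambda>z. norm z < R) (proots q)) z)"
    by (simp add: size_multiset_overloaded_eq)
  also have "\<dots> = roots_in_disc R q"
    unfolding roots_in_disc_def using assms by (intro sum.cong) auto
  finally show ?thesis .
qed

lemma zorder_poly_eq_order:
  assumes "q \<noteq> 0"
  shows "zorder (poly q) z = int (order z q)"
proof -
  obtain s where s: "q = [:- z, 1:] ^ order z q * s" and nd: "\<not> [:- z, 1:] dvd s"
    using order_decomp[OF assms] by blast
  show ?thesis
  proof (rule zorder_eqI[of UNIV z "poly s"])
    show "poly s z \<noteq> 0" using nd poly_eq_0_iff_dvd by blast
    fix w
    have "poly q w = (w - z) ^ order z q * poly s w" by (subst s) (simp add: poly_power)
    then show "poly q w = poly s w * (w - z) powi int (order z q)"
      by (simp add: power_int_of_nat mult.commute)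
  qed (auto intro: holomorphic_intros)
qed

lemma sum_winding_number_zorder_poly:
  assumes q: "q \<noteq> 0" and R: "R > 0" and nz: "\<And>z. norm z = R \<Longrightarrow> poly q z \<noteq> 0"
  shows "(\<Sum>z\<in>{z\<in>UNIV. poly q z = 0}. winding_number (circlepath 0 R) z * of_int (zorder (poly q) z))
       = of_nat (roots_in_disc R q)"
proof -
  have winding: "winding_number (circlepath 0 R) z * of_int (zorder (poly q) z)
        = (if norm z < R then of_nat (order z q) else 0)" if "poly q z = 0" for z
  proof (cases "norm z < R")
    case True
    then show ?thesis using winding_number_circlepath zorder_poly_eq_order[OF q] by simp
  next
    case False
    then have "norm z > R" using nz that by force
    then have "winding_number (circlepath 0 R) z = 0"
      by (intro winding_number_zero_outside[of _ "cball 0 R"]) (auto simp: R less_imp_le)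
    then show ?thesis using False by simp
  qed
  have "(\<Sum>z\<in>{z\<in>UNIV. poly q z = 0}. winding_number (circlepath 0 R) z * of_int (zorder (poly q) z))
      = (\<Sum>z\<in>{z. poly q z = 0}. (if norm z < R then of_nat (order z q) else 0))"
    by (intro sum.cong) (auto simp: winding)
  also have "\<dots> = (\<Sum>z\<in>{z. poly q z = 0 \<and> norm z < R}. of_nat (order z q))"
    using poly_roots_finite[OF q] by (simp add: sum.inter_filter[symmetric] conj_commute)
  finally show ?thesis by (simp add: roots_in_disc_def)
qed

lemma roots_in_disc_Rouche:
  fixes q g :: "complex poly"
  assumes R: "R > 0" and q: "q \<noteq> 0" and lt: "\<And>z. norm z = R \<Longrightarrow> norm (poly g z) < norm (poly q z)"
  shows "roots_in_disc R (q + g) = roots_in_disc R q"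
proof -
  have nz_q: "poly q z \<noteq> 0" if "norm z = R" for z using lt[OF that] by auto
  have nz_qg: "poly (q + g) z \<noteq> 0" if "norm z = R" for z
    using lt[OF that] by (auto simp: add_eq_0_iff)
  have qg: "q + g \<noteq> 0"
    using nz_qg[of "complex_of_real R"] R by (metis abs_of_pos norm_of_real poly_0)
  have "(\<Sum>z\<in>{z\<in>UNIV. poly q z + poly g z = 0}.
          winding_number (circlepath 0 R) z * zorder (\<lambda>z. poly q z + poly g z) z)
      = (\<Sum>z\<in>{z\<in>UNIV. poly q z = 0}. winding_number (circlepath 0 R) z * zorder (poly q) z)"
  proof (rule Rouche_theorem)
    show "finite {z \<in> UNIV. poly q z + poly g z = 0}" using poly_roots_finite[OF qg] by simp
    show "finite {z \<in> UNIV. poly q z = 0}" using poly_roots_finite[OF q] by simp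
    show "\<forall>z\<in>path_image (circlepath 0 R). cmod (poly g z) < cmod (poly q z)" using lt R by auto
  qed (auto intro: holomorphic_intros)
  moreover have "(\<lambda>z. poly q z + poly g z) = poly (q + g)" by auto
  ultimately have "of_nat (roots_in_disc R (q + g)) = (of_nat (roots_in_disc R q) :: complex)"
    using sum_winding_number_zorder_poly[OF q R nz_q] sum_winding_number_zorder_poly[OF qg R nz_qg]
    by simp
  then show ?thesis by simp
qed

definition symbol_poly :: "nat \<Rightarrow> nat \<Rightarrow> (int \<Rightarrow> real) \<Rightarrow> complex poly" where
  "symbol_poly p r c = (\<Sum>l\<in>{- int r..int p}. monom (complex_of_real (c l)) (nat (l + int r)))"

lemma poly_symbol_poly_sum:
  "poly (symbol_poly p r c) z = (\<Sum>l\<in>{- int r..int p}. complex_of_real (c l) * z ^ nat (l + int r))"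
  by (simp add: symbol_poly_def poly_sum poly_monom)

lemma poly_symbol_poly:
  assumes "z \<noteq> 0"
  shows "poly (symbol_poly p r c) z = z ^ r * symbolA p r c z"
  unfolding poly_symbol_poly_sum symbolA_def sum_distrib_left
proof (intro sum.cong refl)
  fix l assume "l \<in> {- int r..int p}"
  then have "z ^ nat (l + int r) = z powi (l + int r)"
    by (simp add: power_int_def)
  also have "\<dots> = z ^ r * z powi l" using assms by (simp add: power_int_add power_int_of_nat)
  finally show "complex_of_real (c l) * z ^ nat (l + int r) = z ^ r * (complex_of_real (c l) * z powi l)"
    by simp
qed

lemma poly_symbol_poly_minus_monom:
  "z \<noteq> 0 \<Longrightarrow> poly (symbol_poly p r c - monom M r) z = z ^ r * (symbolA p r c z - M)"
  by (simp add: poly_symbol_poly poly_monom algebra_simps)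

lemma symbol_poly_nonzero:
  assumes "c (- int r) \<noteq> 0"
  shows "symbol_poly p r c \<noteq> 0"
proof -
  have "poly (symbol_poly p r c) 0 = (\<Sum>l\<in>{- int r..int p}. if l = - int r then of_real (c l) else 0)"
    unfolding poly_symbol_poly_sum by (intro sum.cong refl) auto
  then show ?thesis using assms by (auto simp: sum.delta)
qed

lemma norm_poly_symbol_poly_le:
  "norm z = 1 \<Longrightarrow> norm (poly (symbol_poly p r c) z) \<le> (\<Sum>l\<in>{- int r..int p}. \<bar>c l\<bar>)"
  unfolding poly_symbol_poly_sum
  by (rule order_trans[OF norm_sum]) (simp add: norm_mult norm_power)

lemma symbol_poly_root_on_circle:
  assumes A4: "\<forall>\<theta>\<in>{-pi..pi} - {0}. symbolA p r c (cis \<theta>) \<noteq> 0"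
    and z: "norm z = 1" "poly (symbol_poly p r c) z = 0"
  shows "z = 1"
proof (rule ccontr)
  assume "z \<noteq> 1"
  have "z \<noteq> 0" using z by auto
  then have zc: "z = cis (Arg z)" using cis_Arg z by (simp add: sgn_eq)
  with \<open>z \<noteq> 1\<close> have "Arg z \<in> {-pi..pi} - {0}" using Arg_bounded[of z] by auto
  then have "symbolA p r c z \<noteq> 0" using A4 zc by metis
  then show False using poly_symbol_poly[OF \<open>z \<noteq> 0\<close>] z by simp
qed

lemma poly_symbol_poly_one:
  "(\<Sum>l\<in>{- int r..int p}. c l) = 0 \<Longrightarrow> poly (symbol_poly p r c) 1 = 0"
  by (simp add: poly_symbol_poly_sum flip: of_real_sum)

lemma poly_pderiv_symbol_poly_one:
  assumes A1a: "(\<Sum>l\<in>{- int r..int p}. c l) = 0"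
    and A1b: "(\<Sum>l\<in>{- int r..int p}. of_int l * c l) = a"
  shows "poly (pderiv (symbol_poly p r c)) 1 = complex_of_real a"
proof -
  have "poly (pderiv (symbol_poly p r c)) 1
      = (\<Sum>l\<in>{- int r..int p}. complex_of_real (of_int (l + int r) * c l))"
    unfolding symbol_poly_def higher_pderiv_sum[where n=1, simplified] pderiv_monom poly_sum
    by (intro sum.cong refl) (auto simp: poly_monom)
  also have "\<dots> = complex_of_real ((\<Sum>l\<in>{- int r..int p}. of_int l * c l)
      + of_nat r * (\<Sum>l\<in>{- int r..int p}. c l))"
    by (simp add: sum.distrib sum_distrib_left algebra_simps)
  finally show ?thesis using A1a A1b by simp
qed

section \<open>Perturbing the symbol polynomial\<close>

lemma roots_in_disc_cong_radius:
  assumes "\<And>z. poly q z = 0 \<Longrightarrow> R \<le> norm z \<Longrightarrow> norm z < R' \<Longrightarrow> False" and "R \<le> R'"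
  shows "roots_in_disc R q = roots_in_disc R' q"
proof -
  have "{z. poly q z = 0 \<and> norm z < R} = {z. poly q z = 0 \<and> norm z < R'}"
    using assms by force
  then show ?thesis by (simp add: roots_in_disc_def)
qed

lemma roots_in_unit_disc_in_smaller_disc:
  fixes q :: "complex poly"
  assumes "q \<noteq> 0"
  obtains R where "0 < R" "R < 1" "\<And>z. poly q z = 0 \<Longrightarrow> norm z < 1 \<Longrightarrow> norm z < R"
proof -
  define S where "S = insert (1/2) (norm ` {z. poly q z = 0 \<and> norm z < 1})"
  have fin: "finite S" unfolding S_def using poly_roots_finite[OF assms] by auto
  have "Max S < 1" using fin by (auto simp: S_def)
  moreover have "1/2 \<le> Max S" using fin by (intro Max_ge) (auto simp: S_def)
  moreover have "norm z \<le> Max S" if "poly q z = 0" "norm z < 1" for z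
    using fin that by (intro Max_ge) (auto simp: S_def)
  ultimately show ?thesis by (intro that[of "(1 + Max S) / 2"]) force+
qed

lemma compact_continuous_pos_bounded_below:
  fixes f :: "'a::topological_space \<Rightarrow> real"
  assumes "compact K" "continuous_on K f" "\<And>z. z \<in> K \<Longrightarrow> f z > 0"
  obtains \<nu> where "\<nu> > 0" "\<And>z. z \<in> K \<Longrightarrow> \<nu> \<le> f z"
proof (cases "K = {}")
  case False
  then obtain z0 where "z0 \<in> K" "\<And>y. y \<in> K \<Longrightarrow> f z0 \<le> f y"
    using continuous_attains_inf[OF assms(1) _ assms(2)] by blast
  then show ?thesis using that assms(3) by blast
qed (auto intro: that[of 1])

lemma poly_bounded_below_near_unit_circle:
  fixes q :: "complex poly"
  assumes inner: "\<And>z. poly q z = 0 \<Longrightarrow> norm z < 1 \<Longrightarrow> norm z < R"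
    and circle: "\<And>z. norm z = 1 \<Longrightarrow> poly q z = 0 \<Longrightarrow> z = 1" and "\<eta> > 0"
  obtains \<nu> where "\<nu> > 0"
    "\<And>z. R \<le> norm z \<Longrightarrow> norm z \<le> 1 \<Longrightarrow> \<eta> \<le> norm (z - 1) \<Longrightarrow> \<nu> \<le> norm (poly q z)"
proof -
  define K where "K = {z::complex. R \<le> norm z \<and> norm z \<le> 1 \<and> \<eta> \<le> norm (z - 1)}"
  have "K = (cball 0 1 \<inter> {z. R \<le> norm z}) \<inter> {z. \<eta> \<le> norm (z - 1)}" by (auto simp: K_def)
  moreover have "closed {z::complex. R \<le> norm z}" "closed {z::complex. \<eta> \<le> norm (z - 1)}"
    by (intro closed_Collect_le continuous_intros)+
  ultimately have "compact K" by (simp only:) (intro compact_Int_closed compact_cball)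
  moreover have "norm (poly q z) > 0" if "z \<in> K" for z
  proof -
    have "poly q z \<noteq> 0"
    proof
      assume root: "poly q z = 0"
      show False
      proof (cases "norm z < 1")
        case True
        then show False using inner[OF root] that by (simp add: K_def)
      next
        case False
        then show False using circle[OF _ root] that \<open>\<eta> > 0\<close> by (auto simp: K_def)
      qed
    qed
    then show ?thesis by simp
  qed
  moreover have "continuous_on K (\<lambda>z. norm (poly q z))" by (intro continuous_intros)
  ultimately obtain \<nu> where "\<nu> > 0" "\<And>z. z \<in> K \<Longrightarrow> \<nu> \<le> norm (poly q z)"
    using compact_continuous_pos_bounded_below[of K "\<lambda>z. norm (poly q z)"] by blast
  then show ?thesis using that by (simp add: K_def)
qed

lemma roots_in_disc_monom:
  assumes "M \<noteq> 0"
  shows "roots_in_disc 1 (monom M n :: complex poly) = n"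
proof -
  have "monom M n = smult M ([:- 0, 1:] ^ n)" by (simp add: monom_altdef)
  then have "order 0 (monom M n) = n" using assms order_power_n_n[of "0::complex" n]
    by (simp add: order_smult)
  moreover have "{z. poly (monom M n) z = 0 \<and> norm z < 1} = (if n = 0 then {} else {0})"
    using assms by (auto simp: poly_monom)
  ultimately show ?thesis by (simp add: roots_in_disc_def)
qed

context
  fixes p r :: nat and c :: "int \<Rightarrow> real"
begin

lemma roots_in_disc_symbol_poly_large:
  assumes M: "norm M > (\<Sum>l\<in>{- int r..int p}. \<bar>c l\<bar>)"
  shows "roots_in_disc 1 (symbol_poly p r c - monom M r) = r"
proof -
  have "0 < norm M" using M by (meson abs_ge_zero le_less_trans sum_nonneg)
  then have M0: "- M \<noteq> 0" by auto
  have "roots_in_disc 1 (monom (- M) r + symbol_poly p r c) = roots_in_disc 1 (monom (- M) r)"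
  proof (rule roots_in_disc_Rouche)
    fix z :: complex assume z: "norm z = 1"
    show "norm (poly (symbol_poly p r c) z) < norm (poly (monom (- M) r) z)"
      using norm_poly_symbol_poly_le[OF z, of p r c] M z by (simp add: poly_monom norm_mult norm_power)
  qed (use M0 in simp_all)
  then show ?thesis using roots_in_disc_monom[OF M0] by (simp add: minus_monom[symmetric] add.commute)
qed

lemma roots_in_disc_symbol_poly_locally_constant:
  assumes M0: "\<And>z. norm z = 1 \<Longrightarrow> symbolA p r c z \<noteq> M0"
  shows "\<exists>\<delta>>0. \<forall>M. norm (M - M0) < \<delta> \<longrightarrow>
    roots_in_disc 1 (symbol_poly p r c - monom M r) = roots_in_disc 1 (symbol_poly p r c - monom M0 r)"
proof -
  let ?Q = "symbol_poly p r c - monom M0 r"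
  obtain \<delta> where \<delta>: "\<delta> > 0" "\<And>z. z \<in> sphere 0 1 \<Longrightarrow> \<delta> \<le> norm (poly ?Q z)"
  proof (rule compact_continuous_pos_bounded_below[of "sphere 0 1" "\<lambda>z. norm (poly ?Q z)"])
    show "norm (poly ?Q z) > 0" if "z \<in> sphere 0 1" for z
    proof -
      have "z \<noteq> 0" "norm z = 1" using that by auto
      then show ?thesis using M0[of z] poly_symbol_poly_minus_monom[of z p r c M0]
        by (simp del: poly_diff)
    qed
  qed (auto intro!: continuous_intros)
  have "roots_in_disc 1 (symbol_poly p r c - monom M r) = roots_in_disc 1 ?Q"
    if M: "norm (M - M0) < \<delta>" for M
  proof -
    have "roots_in_disc 1 (?Q + monom (M0 - M) r) = roots_in_disc 1 ?Q"
    proof (rule roots_in_disc_Rouche)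
      show "?Q \<noteq> 0" using \<delta>(1) \<delta>(2)[of 1] by auto
      fix z :: complex assume z: "norm z = 1"
      have "norm (poly (monom (M0 - M) r) z) = norm (M - M0)"
        using z by (simp add: poly_monom norm_mult norm_power norm_minus_commute)
      also have "\<dots> < norm (poly ?Q z)" using M \<delta>(2)[of z] z by simp
      finally show "norm (poly (monom (M0 - M) r) z) < norm (poly ?Q z)" .
    qed simp
    moreover have "?Q + monom (M0 - M) r = symbol_poly p r c - monom M r"
      by (subst diff_monom[symmetric]) algebra
    ultimately show ?thesis by simp
  qed
  then show ?thesis using \<delta>(1) by blast
qed

text \<open>Since \<open>P(1) = 0\<close> and \<open>P'(1) = a < 0\<close>, adding \<open>t z\<^sup>r\<close> with \<open>t > 0\<close> moves the
  root at \<open>1\<close> to \<open>1 - t/a + o(t)\<close>, i.e. out of the unit disc.\<close>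

lemma symbol_poly_perturbed_root_near_one:
  assumes a_neg: "a < 0"
    and A1a: "(\<Sum>l\<in>{- int r..int p}. c l) = 0"
    and A1b: "(\<Sum>l\<in>{- int r..int p}. of_int l * c l) = a"
  obtains \<eta> where "\<eta> > 0" "\<And>t z. t > 0 \<Longrightarrow> norm (z - 1) < \<eta> \<Longrightarrow>
    poly (symbol_poly p r c + monom (of_real t) r) z = 0 \<Longrightarrow> norm z > 1"
proof -
  obtain Q where PQ: "symbol_poly p r c = [:-1, 1:] * Q"
    using poly_symbol_poly_one[OF A1a] poly_eq_0_iff_dvd by blast
  have "poly (pderiv (symbol_poly p r c)) 1 = poly Q 1"
    unfolding PQ pderiv_mult by (simp add: pderiv_pCons)
  then have Q1: "poly Q 1 = complex_of_real a"
    using poly_pderiv_symbol_poly_one[OF A1a A1b] by simp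
  define g where "g = (\<lambda>z. z ^ r / poly Q z)"
  have "isCont g 1" unfolding g_def using Q1 a_neg by (intro continuous_intros) auto
  moreover have "g 1 = 1 / complex_of_real a" using Q1 by (simp add: g_def)
  moreover have "- 1 / a > 0" using a_neg by simp
  ultimately obtain \<eta> where \<eta>: "\<eta> > 0"
    and near: "\<And>z. dist z 1 < \<eta> \<Longrightarrow> dist (g z) (1 / complex_of_real a) < - 1 / a"
    unfolding continuous_at_eps_delta by metis
  have Re_g: "Re (g z) < 0" if "norm (z - 1) < \<eta>" for z
  proof -
    have "Re (g z) - 1 / a \<le> norm (g z - 1 / complex_of_real a)"
      using complex_Re_le_cmod[of "g z - 1 / complex_of_real a"] by simp
    then show ?thesis using near[of z] that by (simp add: dist_norm)
  qed
  have "norm z > 1" if t: "t > 0" and z: "norm (z - 1) < \<eta>"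
    and root: "poly (symbol_poly p r c + monom (of_real t) r) z = 0" for t z
  proof -
    have "poly Q z \<noteq> 0" using Re_g[OF z] by (auto simp: g_def)
    moreover have "(z - 1) * poly Q z = - complex_of_real t * z ^ r"
      using root by (simp add: PQ poly_monom algebra_simps add_eq_0_iff)
    ultimately have "z - 1 = - complex_of_real t * g z" by (simp add: g_def field_simps)
    then have "Re (z - 1) = Re (- complex_of_real t * g z)" by simp
    then have "Re z - 1 = - t * Re (g z)" by simp
    then have "Re z > 1" using mult_pos_neg[OF t Re_g[OF z]] by linarith
    then show ?thesis using complex_Re_le_cmod[of z] by linarith
  qed
  then show ?thesis using \<eta> that by blast
qed

lemma roots_in_disc_symbol_poly_small:
  assumes cr: "c (- int r) \<noteq> 0" and a_neg: "a < 0"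
    and A1a: "(\<Sum>l\<in>{- int r..int p}. c l) = 0"
    and A1b: "(\<Sum>l\<in>{- int r..int p}. of_int l * c l) = a"
    and A4: "\<forall>\<theta>\<in>{-pi..pi} - {0}. symbolA p r c (cis \<theta>) \<noteq> 0"
  shows "\<exists>t0>0. \<forall>t. 0 < t \<and> t < t0 \<longrightarrow>
    roots_in_disc 1 (symbol_poly p r c - monom (- of_real t) r) = roots_in_disc 1 (symbol_poly p r c)"
proof -
  let ?P = "symbol_poly p r c"
  have P0: "?P \<noteq> 0" using cr by (rule symbol_poly_nonzero)
  obtain R where R: "0 < R" "R < 1" and inner: "\<And>z. poly ?P z = 0 \<Longrightarrow> norm z < 1 \<Longrightarrow> norm z < R"
    using roots_in_unit_disc_in_smaller_disc[OF P0] by blast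
  obtain \<eta> where \<eta>: "\<eta> > 0" and near_one: "\<And>t z. t > 0 \<Longrightarrow> norm (z - 1) < \<eta> \<Longrightarrow>
      poly (?P + monom (of_real t) r) z = 0 \<Longrightarrow> norm z > 1"
    using symbol_poly_perturbed_root_near_one[OF a_neg A1a A1b] by blast
  obtain \<nu> where \<nu>: "\<nu> > 0" and P_ge: "\<And>z. R \<le> norm z \<Longrightarrow> norm z \<le> 1 \<Longrightarrow>
      min \<eta> (1 - R) \<le> norm (z - 1) \<Longrightarrow> \<nu> \<le> norm (poly ?P z)"
    using poly_bounded_below_near_unit_circle[OF inner symbol_poly_root_on_circle[OF A4], where \<eta>="min \<eta> (1 - R)"]
      \<eta> R by auto
  have near_circle: "1 - R \<le> norm (z - 1)" if "norm z = R" for z :: complex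
    using that norm_triangle_ineq2[of 1 z] by (simp add: norm_minus_commute)
  have "roots_in_disc 1 (?P + monom (of_real t) r) = roots_in_disc 1 ?P" if t: "0 < t" "t < \<nu>" for t
  proof -
    have small: "norm (poly (monom (of_real t) r) z) < \<nu>" if "norm z \<le> 1" for z :: complex
    proof -
      have "t * norm z ^ r \<le> t" using that t by (simp add: mult_left_le power_le_one)
      then have "t * norm z ^ r < \<nu>" using t by linarith
      then show ?thesis using t by (simp add: poly_monom norm_mult norm_power)
    qed
    have "roots_in_disc 1 (?P + monom (of_real t) r) = roots_in_disc R (?P + monom (of_real t) r)"
    proof (rule roots_in_disc_cong_radius[symmetric])
      fix z assume z: "poly (?P + monom (of_real t) r) z = 0" "R \<le> norm z" "norm z < 1"
      show False
      proof (cases "norm (z - 1) < min \<eta> (1 - R)")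
        case True
        then show False using near_one[OF t(1) _ z(1)] z(3) by simp
      next
        case False
        then have "\<nu> \<le> norm (poly ?P z)" using z by (intro P_ge) auto
        also have "\<dots> = norm (poly (monom (of_real t) r) z)" using z(1) by (simp add: add_eq_0_iff)
        finally show False using small[of z] z(3) by simp
      qed
    qed (use R in simp)
    also have "\<dots> = roots_in_disc R ?P"
    proof (rule roots_in_disc_Rouche[OF R(1) P0])
      fix z :: complex assume "norm z = R"
      then show "norm (poly (monom (of_real t) r) z) < norm (poly ?P z)"
      proof -
        have "min \<eta> (1 - R) \<le> norm (z - 1)" using near_circle[of z] \<open>norm z = R\<close> by linarith
        then show ?thesis using small[of z] P_ge[of z] \<open>norm z = R\<close> R by simp
      qed
    qed
    also have "\<dots> = roots_in_disc 1 ?P"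
    proof (rule roots_in_disc_cong_radius)
      fix z assume "poly ?P z = 0" "R \<le> norm z" "norm z < 1"
      then show False using inner by force
    qed (use R in simp)
    finally show ?thesis .
  qed
  then show ?thesis using \<nu> by (auto simp: minus_monom[symmetric])
qed

end

section \<open>Counting the roots of the symbol polynomial in the unit disc\<close>

lemma poly_rho_poly_one: "poly (rho_poly k alpha) (1::real) = (\<Sum>s\<le>k. alpha s)"
  by (simp add: poly_rho_poly)

lemma poly_sigma_poly_one: "poly (sigma_poly k beta) (1::real) = (\<Sum>s<k. beta s)"
  by (simp add: poly_sigma_poly)

lemma poly_pderiv_rho_poly_one:
  "poly (pderiv (rho_poly k alpha)) (1::real) = (\<Sum>s\<le>k. of_nat s * alpha s)"
  unfolding rho_poly_def higher_pderiv_sum[where n=1, simplified] pderiv_monom poly_sum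
  by (simp add: poly_monom)

text \<open>By consistency \<open>\<rho>(x) \<sim> \<sigma>(1) (x - 1)\<close>, so the quotient \<open>\<rho>/(\<lambda>\<sigma>)\<close> takes small
  positive values just right of \<open>1\<close>.\<close>

lemma rho_sigma_quotient_small:
  fixes lam t0 :: real
  assumes A2a: "(\<Sum>s\<le>k. alpha s) = 0"
    and A2b: "(\<Sum>s\<le>k. of_nat s * alpha s) = (\<Sum>s<k. beta s)"
    and beta1: "(\<Sum>s<k. beta s) \<noteq> 0" and lam: "lam > 0" and t0: "t0 > 0"
  obtains x t where "x > 1" "poly (sigma_poly k beta) x \<noteq> 0" "0 < t" "t < t0"
    "poly (rho_poly k alpha) x / (lam * poly (sigma_poly k beta) x) = t"
proof -
  have "poly (rho_poly k alpha) (1::real) = 0" using A2a by (simp add: poly_rho_poly_one)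
  then obtain q where q: "(rho_poly k alpha :: real poly) = [:-1, 1:] * q"
    using poly_eq_0_iff_dvd by blast
  have "poly (pderiv (rho_poly k alpha)) (1::real) = poly q 1" unfolding q pderiv_mult by (simp add: pderiv_pCons)
  then have q1: "poly q 1 = poly (sigma_poly k beta) (1::real)"
    using A2b by (simp add: poly_pderiv_rho_poly_one poly_sigma_poly_one)
  define h where "h = (\<lambda>x. poly q x / poly (sigma_poly k beta) x)"
  have "isCont h 1" unfolding h_def using beta1 by (intro continuous_intros) (simp add: poly_sigma_poly_one)
  moreover have "h 1 = 1" using q1 beta1 by (simp add: h_def poly_sigma_poly_one)
  ultimately obtain d where d: "d > 0" "\<And>x. dist x 1 < d \<Longrightarrow> dist (h x) 1 < 1/2"
    unfolding continuous_at_eps_delta by (metis zero_less_divide_1_iff zero_less_numeral)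
  define x where "x = 1 + min (d/2) (t0 * lam / 4)"
  have x1: "x > 1" and "dist x 1 < d" using d t0 lam by (auto simp: x_def dist_real_def)
  then have hx: "\<bar>h x - 1\<bar> < 1/2" using d(2) by (simp add: dist_real_def)
  then have sx: "poly (sigma_poly k beta) x \<noteq> 0" by (auto simp: h_def)
  define t where "t = (x - 1) * h x / lam"
  have "poly (rho_poly k alpha) x / (lam * poly (sigma_poly k beta) x) = t"
    using sx lam by (simp add: t_def h_def q field_simps)
  moreover have h_pos: "h x > 0" and "h x \<le> 3/2" using hx by linarith+
  then have "0 < t" using x1 lam by (simp add: t_def)
  moreover have "(x - 1) * h x \<le> (t0 * lam / 4) * (3/2)"
    using x1 h_pos \<open>h x \<le> 3/2\<close> t0 lam by (intro mult_mono) (auto simp: x_def)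
  then have "(x - 1) * h x < t0 * lam" using mult_pos_pos[OF t0 lam] by linarith
  then have "t < t0" using lam by (simp add: t_def divide_less_eq)
  ultimately show ?thesis using that x1 sx by blast
qed

lemma rho_sigma_quotient_large:
  fixes lam B :: real
  assumes k1: "k \<ge> 1" and ak: "alpha k = 1" and lam: "lam > 0"
    and beta1: "(\<Sum>s<k. beta s) \<noteq> 0" and B: "B \<ge> 0"
  obtains x where "x > 1" "poly (sigma_poly k beta) x \<noteq> 0"
    "B < \<bar>poly (rho_poly k alpha) x / (lam * poly (sigma_poly k beta) x)\<bar>"
proof -
  have "sigma_poly k beta \<noteq> (0 :: real poly)" using beta1 poly_sigma_poly_one[of k beta] by auto
  then have fin: "finite {x. poly (sigma_poly k beta) x = (0::real)}" by (rule poly_roots_finite)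
  define Sa where "Sa = (\<Sum>s<k. \<bar>alpha s\<bar>)"
  define Sb where "Sb = (\<Sum>s<k. \<bar>beta s\<bar>)"
  have "Sa \<ge> 0" "Sb \<ge> 0" by (simp_all add: Sa_def Sb_def sum_nonneg)
  define X where "X = 1 + Sa + lam * B * Sb"
  define x where "x = max X (Max (insert 0 {x. poly (sigma_poly k beta) x = 0})) + 1"
  have xX: "x > X" by (simp add: x_def)
  moreover have "X \<ge> 1" using \<open>Sa \<ge> 0\<close> \<open>Sb \<ge> 0\<close> B lam by (simp add: X_def)
  ultimately have x1: "x > 1" by linarith
  have sx: "poly (sigma_poly k beta) x \<noteq> 0"
  proof
    assume "poly (sigma_poly k beta) x = 0"
    then have "x \<le> Max (insert 0 {x. poly (sigma_poly k beta) x = 0})" using fin by simp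
    then show False by (simp add: x_def)
  qed
  have pow: "x ^ s \<le> x ^ (k - 1)" if "s < k" for s using x1 that by (intro power_increasing) auto
  have "\<bar>\<Sum>s<k. alpha s * x ^ s\<bar> \<le> Sa * x ^ (k - 1)"
    unfolding Sa_def sum_distrib_right
    by (rule order_trans[OF sum_abs]) (use x1 pow in \<open>auto intro!: sum_mono mult_left_mono simp: abs_mult\<close>)
  moreover have "poly (rho_poly k alpha) x = x * x ^ (k - 1) + (\<Sum>s<k. alpha s * x ^ s)"
    using ak k1 by (simp add: poly_rho_poly lessThan_Suc_atMost[symmetric] power_eq_if)
  ultimately have rho_ge: "x ^ (k - 1) * (x - Sa) \<le> \<bar>poly (rho_poly k alpha) x\<bar>"
    using x1 by (simp add: algebra_simps)
  have "\<bar>poly (sigma_poly k beta) x\<bar> \<le> Sb * x ^ (k - 1)"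
    unfolding poly_sigma_poly Sb_def sum_distrib_right
    by (rule order_trans[OF sum_abs]) (use x1 pow in \<open>auto intro!: sum_mono mult_left_mono simp: abs_mult\<close>)
  then have "B * (lam * \<bar>poly (sigma_poly k beta) x\<bar>) \<le> x ^ (k - 1) * (lam * B * Sb)"
    using B lam by (simp add: mult_left_mono algebra_simps)
  also have "\<dots> < x ^ (k - 1) * (x - Sa)" using xX x1 by (intro mult_strict_left_mono) (auto simp: X_def)
  finally have "B * (lam * \<bar>poly (sigma_poly k beta) x\<bar>) < \<bar>poly (rho_poly k alpha) x\<bar>"
    using rho_ge by linarith
  then have "B < \<bar>poly (rho_poly k alpha) x\<bar> / (lam * \<bar>poly (sigma_poly k beta) x\<bar>)"
    using lam sx by (simp add: pos_less_divide_eq)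
  then show ?thesis using that x1 sx lam by (simp add: abs_mult)
qed

definition rho_sigma_quotient ::
    "nat \<Rightarrow> (nat \<Rightarrow> real) \<Rightarrow> (nat \<Rightarrow> real) \<Rightarrow> real \<Rightarrow> complex \<Rightarrow> complex" where
  "rho_sigma_quotient k alpha beta lam \<tau> =
    - poly (rho_poly k alpha) \<tau> / (of_real lam * poly (sigma_poly k beta) \<tau>)"

lemma rho_sigma_quotient_of_real:
  "rho_sigma_quotient k alpha beta lam (of_real x) =
    - of_real (poly (rho_poly k alpha) x / (lam * poly (sigma_poly k beta) x))"
  by (simp add: rho_sigma_quotient_def poly_rho_poly_of_real poly_sigma_poly_of_real)

lemma connected_outside_unit_disc_minus_roots:
  fixes q :: "complex poly"
  assumes "q \<noteq> 0"
  shows "connected ({\<tau>. 1 < norm \<tau>} - {\<tau>. poly q \<tau> = 0})"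
proof -
  have "{\<tau>::complex. 1 < norm \<tau>} = - cball 0 1" by auto
  then have "connected {\<tau>::complex. 1 < norm \<tau>}" "open {\<tau>::complex. 1 < norm \<tau>}"
    by (auto intro!: connected_complement_bounded_convex)
  then show ?thesis using poly_roots_finite[OF assms] by (intro connected_open_delete_finite) auto
qed

text \<open>By the von Neumann condition, \<open>rho_sigma_quotient\<close> maps \<open>|\<tau>| > 1\<close> into the complement of
  the curve \<open>A(S\<^sup>1)\<close>, where the number of roots in the unit disc is locally constant.\<close>

lemma roots_in_disc_symbol_poly_eventually_const:
  assumes "k \<ge> 1" "alpha k = 1" "lam > 0" "l2_stable p r c k alpha beta lam"
    and \<tau>: "norm \<tau> > 1" "poly (sigma_poly k beta) \<tau> \<noteq> 0"
  shows "\<forall>\<^sub>F \<tau>' in at \<tau>.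
    roots_in_disc 1 (symbol_poly p r c - monom (rho_sigma_quotient k alpha beta lam \<tau>') r) =
    roots_in_disc 1 (symbol_poly p r c - monom (rho_sigma_quotient k alpha beta lam \<tau>) r)"
proof -
  let ?Q = "rho_sigma_quotient k alpha beta lam"
  have "symbolA p r c \<kappa> \<noteq> ?Q \<tau>" if "norm \<kappa> = 1" for \<kappa>
    using l2_stable_von_Neumann[OF assms(1-4) that \<tau>(1)] \<tau>(2) assms(3)
    by (auto simp: rho_sigma_quotient_def field_simps)
  then obtain \<delta> where \<delta>: "\<delta> > 0" and const: "\<And>M. norm (M - ?Q \<tau>) < \<delta> \<Longrightarrow>
      roots_in_disc 1 (symbol_poly p r c - monom M r) =
      roots_in_disc 1 (symbol_poly p r c - monom (?Q \<tau>) r)"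
    using roots_in_disc_symbol_poly_locally_constant by metis
  have "isCont ?Q \<tau>" unfolding rho_sigma_quotient_def using \<tau>(2) assms(3)
    by (intro continuous_intros) auto
  then have "\<forall>\<^sub>F \<tau>' in at \<tau>. dist (?Q \<tau>') (?Q \<tau>) < \<delta>" using \<delta> by (simp add: isCont_def tendstoD)
  then show ?thesis by eventually_elim (simp add: const dist_norm)
qed

theorem symbol_poly_roots_in_unit_disc:
  assumes k1: "k \<ge> 1" and ak: "alpha k = 1" and lam: "lam > 0"
    and st: "l2_stable p r c k alpha beta lam"
    and cr: "c (- int r) \<noteq> 0" and a_neg: "a < 0"
    and A1a: "(\<Sum>l\<in>{- int r..int p}. c l) = 0"
    and A1b: "(\<Sum>l\<in>{- int r..int p}. of_int l * c l) = a"
    and A2a: "(\<Sum>s\<le>k. alpha s) = 0"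
    and A2b: "(\<Sum>s\<le>k. of_nat s * alpha s) = (\<Sum>s<k. beta s)"
    and A4: "\<forall>\<theta>\<in>{-pi..pi} - {0}. symbolA p r c (cis \<theta>) \<noteq> 0"
  shows "roots_in_disc 1 (symbol_poly p r c) = r"
proof -
  define N where "N = (\<lambda>\<tau>. roots_in_disc 1
    (symbol_poly p r c - monom (rho_sigma_quotient k alpha beta lam \<tau>) r))"
  define D where "D = {\<tau>::complex. 1 < norm \<tau>} - {\<tau>. poly (sigma_poly k beta) \<tau> = 0}"
  have beta1: "(\<Sum>s<k. beta s) \<noteq> 0"
    using l2_stable_sum_beta_nonzero[OF k1 ak lam st A1a A2a A2b] .
  then have "poly (sigma_poly k beta) (1::complex) \<noteq> 0"
    using poly_sigma_poly_of_real[of k beta 1] poly_sigma_poly_one[of k beta]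
    by (metis of_real_1 of_real_eq_0_iff)
  then have "sigma_poly k beta \<noteq> (0 :: complex poly)" by auto
  then have "connected D" unfolding D_def by (rule connected_outside_unit_disc_minus_roots)
  moreover have "\<forall>\<tau>\<in>D. \<forall>\<^sub>F \<tau>' in at \<tau> within D. N \<tau> = N \<tau>'"
  proof
    fix \<tau> assume "\<tau> \<in> D"
    then have "\<forall>\<^sub>F \<tau>' in at \<tau>. N \<tau>' = N \<tau>"
      using roots_in_disc_symbol_poly_eventually_const[OF k1 ak lam st] by (simp add: D_def N_def)
    then have "\<forall>\<^sub>F \<tau>' in at \<tau>. N \<tau> = N \<tau>'" by (rule eventually_mono) simp
    then show "\<forall>\<^sub>F \<tau>' in at \<tau> within D. N \<tau> = N \<tau>'"
      by (rule filter_leD[OF at_le[OF subset_UNIV], rotated])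
  qed
  moreover have "0 \<le> (\<Sum>l\<in>{- int r..int p}. \<bar>c l\<bar>)" by (simp add: sum_nonneg)
  then obtain x_large :: real where "x_large > 1" "poly (sigma_poly k beta) x_large \<noteq> 0" and large:
    "(\<Sum>l\<in>{- int r..int p}. \<bar>c l\<bar>) <
      \<bar>poly (rho_poly k alpha) x_large / (lam * poly (sigma_poly k beta) x_large)\<bar>"
    using rho_sigma_quotient_large[where k=k and alpha=alpha and beta=beta, OF k1 ak lam beta1]
    by blast
  moreover obtain t0 where "t0 > 0" and small: "\<And>t. 0 < t \<Longrightarrow> t < t0 \<Longrightarrow>
      roots_in_disc 1 (symbol_poly p r c - monom (- of_real t) r) = roots_in_disc 1 (symbol_poly p r c)"
    using roots_in_disc_symbol_poly_small[where p=p and r=r and c=c, OF cr a_neg A1a A1b A4] by blast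
  moreover obtain x_small t where "x_small > 1" "poly (sigma_poly k beta) x_small \<noteq> 0" "0 < t" "t < t0"
    "poly (rho_poly k alpha) x_small / (lam * poly (sigma_poly k beta) x_small) = t"
    using rho_sigma_quotient_small[where k=k and alpha=alpha and beta=beta, OF A2a A2b beta1 lam \<open>t0 > 0\<close>]
    by blast
  ultimately have "N (of_real x_large) = N (of_real x_small)"
    by (intro connected_local_const[of D]) (auto simp: D_def poly_sigma_poly_of_real)
  moreover have "N (of_real x_large) = r"
    unfolding N_def rho_sigma_quotient_of_real using large
    by (intro roots_in_disc_symbol_poly_large) (simp only: norm_minus_cancel norm_of_real)
  moreover have "N (of_real x_small) = roots_in_disc 1 (symbol_poly p r c)"
    unfolding N_def rho_sigma_quotient_of_real using small \<open>0 < t\<close> \<open>t < t0\<close> \<open>_ = t\<close> by simp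
  ultimately show ?thesis by simp
qed

section \<open>Difference equations with constant coefficients\<close>

text \<open>\<open>poly_shift q x\<close> is \<open>q(S) x\<close> for the left shift \<open>(S x) i = x (i + 1)\<close>.\<close>

definition poly_shift :: "'a::comm_semiring_1 poly \<Rightarrow> (nat \<Rightarrow> 'a) \<Rightarrow> nat \<Rightarrow> 'a" where
  "poly_shift q x i = (\<Sum>m\<le>degree q. coeff q m * x (i + m))"

lemma poly_shift_eq_sum_atMost:
  "degree q \<le> N \<Longrightarrow> poly_shift q x i = (\<Sum>m\<le>N. coeff q m * x (i + m))"
  unfolding poly_shift_def by (rule sum.mono_neutral_left) (auto simp: coeff_eq_0)

lemma poly_shift_0 [simp]: "poly_shift 0 x i = 0"
  by (simp add: poly_shift_def)

lemma poly_shift_1 [simp]: "poly_shift 1 x i = x i"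
  by (simp add: poly_shift_def)

lemma poly_shift_add: "poly_shift (q1 + q2) x i = poly_shift q1 x i + poly_shift q2 x i"
proof -
  define N where "N = max (degree q1) (degree q2)"
  have "degree (q1 + q2) \<le> N" unfolding N_def by (rule degree_add_le_max)
  then show ?thesis
    using poly_shift_eq_sum_atMost[of q1 N] poly_shift_eq_sum_atMost[of q2 N]
      poly_shift_eq_sum_atMost[of "q1 + q2" N]
    by (simp add: N_def sum.distrib algebra_simps)
qed

lemma poly_shift_smult: "poly_shift (smult a q) x i = a * poly_shift q x i"
proof -
  have "poly_shift (smult a q) x i = (\<Sum>m\<le>degree q. coeff (smult a q) m * x (i + m))"
    by (rule poly_shift_eq_sum_atMost[OF degree_smult_le])
  then show ?thesis by (simp add: poly_shift_def sum_distrib_left mult.assoc)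
qed

lemma poly_shift_pCons: "poly_shift (pCons a q) x i = a * x i + poly_shift q x (Suc i)"
proof -
  have "poly_shift (pCons a q) x i = (\<Sum>m\<le>Suc (degree q). coeff (pCons a q) m * x (i + m))"
    by (rule poly_shift_eq_sum_atMost) (rule degree_pCons_le)
  also have "\<dots> = a * x i + (\<Sum>m\<le>degree q. coeff q m * x (Suc i + m))"
    by (subst sum.atMost_Suc_shift) simp
  finally show ?thesis by (simp add: poly_shift_def)
qed

lemma poly_shift_mult: "poly_shift (q1 * q2) x i = poly_shift q1 (poly_shift q2 x) i"
proof (induction q1 arbitrary: i)
  case (pCons a q)
  have "poly_shift (pCons a q * q2) x i = a * poly_shift q2 x i + poly_shift (q * q2) x (Suc i)"
    by (simp add: poly_shift_add poly_shift_smult poly_shift_pCons)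
  then show ?case by (simp add: pCons.IH poly_shift_pCons)
qed simp

lemma poly_shift_monom: "poly_shift (monom a n) x i = a * x (i + n)"
proof -
  have "poly_shift (monom a n) x i = (\<Sum>m\<le>n. coeff (monom a n) m * x (i + m))"
    by (rule poly_shift_eq_sum_atMost) (rule degree_monom_le)
  also have "\<dots> = (\<Sum>m\<le>n. if m = n then a * x (i + m) else 0)"
    by (intro sum.cong) (auto simp: coeff_monom)
  finally show ?thesis by simp
qed

lemma poly_shift_sum: "poly_shift (\<Sum>l\<in>A. f l) x i = (\<Sum>l\<in>A. poly_shift (f l) x i)"
  by (induct A rule: infinite_finite_induct) (simp_all add: poly_shift_add)

lemma poly_shift_linear:
  fixes z :: "'a::comm_ring_1"
  shows "poly_shift [:- z, 1:] x i = x (Suc i) - z * x i"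
  by (simp add: poly_shift_pCons algebra_simps)

lemma tendsto_poly_shift_zero:
  fixes x :: "nat \<Rightarrow> 'a::real_normed_field"
  assumes "x \<longlonglongrightarrow> 0"
  shows "poly_shift q x \<longlonglongrightarrow> 0"
proof -
  have "(\<lambda>i. \<Sum>m\<le>degree q. coeff q m * x (i + m)) \<longlonglongrightarrow> (\<Sum>m\<le>degree q. coeff q m * 0)"
    using LIMSEQ_ignore_initial_segment[OF assms] by (intro tendsto_intros)
  then show ?thesis by (simp add: poly_shift_def[abs_def])
qed

definition exp_decay :: "(nat \<Rightarrow> 'a::real_normed_vector) \<Rightarrow> bool" where
  "exp_decay x \<longleftrightarrow> (\<exists>C q. 0 < q \<and> q < 1 \<and> (\<forall>j. norm (x j) \<le> C * q ^ j))"

lemma exp_decay_zero: "exp_decay (\<lambda>_. 0)"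
  unfolding exp_decay_def by (intro exI[of _ 0] exI[of _ "1/2"]) simp

lemma exp_decay_imp_tendsto_zero:
  assumes "exp_decay x"
  shows "x \<longlonglongrightarrow> 0"
proof -
  obtain C q where q: "0 < q" "q < 1" and b: "\<And>j. norm (x j) \<le> C * q ^ j"
    using assms unfolding exp_decay_def by blast
  have bound0: "(\<lambda>j. C * q ^ j) \<longlonglongrightarrow> 0"
    using q by (intro tendsto_mult_right_zero LIMSEQ_power_zero) auto
  show ?thesis by (rule Lim_null_comparison[OF always_eventually bound0]) (use b in blast)
qed

lemma exp_decay_shift_scale:
  fixes x :: "nat \<Rightarrow> 'a::real_normed_field"
  assumes "exp_decay x"
  shows "exp_decay (\<lambda>i. a * x (i + n))"
proof -
  obtain C q where q: "0 < q" "q < 1" and b: "\<And>j. norm (x j) \<le> C * q ^ j"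
    using assms unfolding exp_decay_def by blast
  have "norm (a * x (i + n)) \<le> (norm a * C * q ^ n) * q ^ i" for i
    using mult_left_mono[OF b[of "i + n"], of "norm a"] by (simp add: norm_mult power_add algebra_simps)
  then show ?thesis unfolding exp_decay_def using q by blast
qed

lemma exp_decay_forward_recursion:
  fixes z :: "'a::real_normed_field"
  assumes z: "norm z < 1" and y: "exp_decay y" and rec: "\<And>i. x (Suc i) - z * x i = y i"
  shows "exp_decay x"
proof -
  obtain C q where q: "0 < q" "q < 1" and Cq: "\<And>j. norm (y j) \<le> C * q ^ j"
    using y unfolding exp_decay_def by blast
  have C0: "C \<ge> 0" using order_trans[OF norm_ge_zero Cq[of 0]] by simp
  define q' where "q' = (max (norm z) q + 1) / 2"
  have q': "0 < q'" "q' < 1" "norm z < q'" "q \<le> q'" using q z by (auto simp: q'_def)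
  define K where "K = max (norm (x 0)) (C / (q' - norm z))"
  have "C / (q' - norm z) \<le> K" by (simp add: K_def)
  then have K: "C \<le> K * (q' - norm z)" using q' by (simp add: pos_divide_le_eq)
  have "norm (x j) \<le> K * q' ^ j" for j
  proof (induction j)
    case (Suc j)
    have "norm (x (Suc j)) \<le> norm z * norm (x j) + norm (y j)"
      using rec[of j] norm_triangle_ineq[of "z * x j" "y j"] by (simp add: norm_mult algebra_simps)
    also have "\<dots> \<le> norm z * (K * q' ^ j) + C * q' ^ j"
      using Suc.IH Cq[of j] power_mono[OF q'(4), of j] q C0
      by (intro add_mono mult_left_mono) (auto intro: order_trans mult_left_mono)
    also have "\<dots> = q' ^ j * (norm z * K + C)" by (simp add: algebra_simps)
    also have "\<dots> \<le> q' ^ j * (K * q')" using K q' by (intro mult_left_mono) (auto simp: algebra_simps)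
    also have "\<dots> = K * q' ^ Suc j" by (simp add: algebra_simps)
    finally show ?case .
  qed (simp add: K_def)
  then show ?thesis unfolding exp_decay_def using q' by blast
qed

text \<open>For \<open>|z| \<ge> 1\<close> the decaying solution of \<open>v (i + 1) - z v i = f i\<close> is
  \<open>v i = - \<Sum>n. f (i + n) / z\<^sup>n\<^sup>+\<^sup>1\<close>.\<close>

lemma exp_decay_backward_solution:
  fixes z :: "'a::{real_normed_field, banach}"
  assumes z: "norm z \<ge> 1" and f: "exp_decay f"
  obtains v where "exp_decay v" "\<And>i. v (Suc i) - z * v i = f i"
proof -
  obtain C q where q: "0 < q" "q < 1" and Cq: "\<And>j. norm (f j) \<le> C * q ^ j"
    using f unfolding exp_decay_def by blast
  have z0: "z \<noteq> 0" using z by auto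
  define g where "g = (\<lambda>i n. f (i + n) / z ^ Suc n)"
  have g_le: "norm (g i n) \<le> C * q ^ i * q ^ n" for i n
  proof -
    have "norm (g i n) = norm (f (i + n)) / norm z ^ Suc n" by (simp add: g_def norm_divide norm_power norm_mult)
    also have "\<dots> \<le> norm (f (i + n)) / 1"
      using one_le_power[OF z, of "Suc n"] by (intro divide_left_mono) auto
    also have "\<dots> \<le> C * q ^ i * q ^ n" using Cq[of "i + n"] by (simp add: power_add algebra_simps)
    finally show ?thesis .
  qed
  have geom: "summable (\<lambda>n. C * q ^ i * q ^ n)" for i
    using q by (intro summable_mult summable_geometric) simp
  have g_summable: "summable (g i)" for i
    by (rule summable_comparison_test[OF _ geom[of i]]) (use g_le in blast)
  define v where "v = (\<lambda>i. - suminf (g i))"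
  have "v (Suc i) - z * v i = f i" for i
  proof -
    have "(\<Sum>n. g i (Suc n)) = suminf (g i) - g i 0" by (rule suminf_split_head[OF g_summable])
    moreover have "(\<lambda>n. g i (Suc n)) = (\<lambda>n. g (Suc i) n / z)" by (simp add: g_def fun_eq_iff field_simps)
    moreover have "(\<Sum>n. g (Suc i) n / z) = suminf (g (Suc i)) / z" by (rule suminf_divide[OF g_summable])
    ultimately have "suminf (g (Suc i)) / z = suminf (g i) - f i / z" by (simp add: g_def)
    then show ?thesis using z0 by (simp add: v_def field_simps)
  qed
  moreover have "norm (v i) \<le> (C / (1 - q)) * q ^ i" for i
  proof -
    have "norm (v i) \<le> (\<Sum>n. C * q ^ i * q ^ n)" unfolding v_def norm_minus_cancel
      by (rule norm_suminf_le[OF g_le geom])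
    also have "\<dots> = C * q ^ i / (1 - q)" using q by (simp add: suminf_mult suminf_geometric)
    finally show ?thesis by simp
  qed
  ultimately show ?thesis using that q unfolding exp_decay_def by blast
qed

lemma geometric_tendsto_zero_eq_zero:
  fixes v :: "nat \<Rightarrow> 'a::real_normed_field"
  assumes z: "norm z \<ge> 1" and rec: "\<And>i. v (Suc i) = z * v i" and lim: "v \<longlonglongrightarrow> 0"
  shows "v i = 0"
proof -
  have grow: "norm (v i) \<le> norm (v (n + i))" for n
  proof (induction n)
    case (Suc n)
    have "norm (v (n + i)) \<le> norm z * norm (v (n + i))" using z by (simp add: mult_le_cancel_right1)
    then show ?case using Suc.IH by (simp add: rec norm_mult)
  qed simp
  have "(\<lambda>n. norm (v (n + i))) \<longlonglongrightarrow> 0"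
    using tendsto_norm_zero[OF LIMSEQ_ignore_initial_segment[OF lim, of i]] .
  then have "norm (v i) \<le> 0" by (rule LIMSEQ_le_const) (use grow in blast)
  then show ?thesis by simp
qed

definition linear_factors :: "'a::comm_ring_1 multiset \<Rightarrow> 'a poly" where
  "linear_factors S = (\<Prod>z\<in>#S. [:- z, 1:])"

lemma linear_factors_empty [simp]: "linear_factors {#} = 1"
  by (simp add: linear_factors_def)

lemma linear_factors_add_mset [simp]: "linear_factors (add_mset z S) = [:- z, 1:] * linear_factors S"
  by (simp add: linear_factors_def)

lemma linear_factors_union: "linear_factors (S + T) = linear_factors S * linear_factors T"
  by (simp add: linear_factors_def)

lemma monic_linear_factors:
  "degree (linear_factors S :: 'a::idom poly) = size S \<and> coeff (linear_factors S) (size S) = 1"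
proof (induction S)
  case (add z S)
  then have "linear_factors S \<noteq> 0" by auto
  then have "degree ([:- z, 1:] * linear_factors S) = degree [:- z, 1:] + degree (linear_factors S)"
    by (intro degree_mult_eq) auto
  then have "degree (linear_factors (add_mset z S)) = Suc (size S)"
    using add.IH by (simp only: linear_factors_add_mset) simp
  moreover have "lead_coeff (linear_factors (add_mset z S)) = 1"
    using add.IH by (simp only: linear_factors_add_mset lead_coeff_mult) simp
  ultimately show ?case by simp
qed simp

lemma poly_shift_linear_factors_add_mset:
  "poly_shift (linear_factors (add_mset z S)) y i =
    poly_shift (linear_factors S) y (Suc i) - z * poly_shift (linear_factors S) y i"
  by (simp only: linear_factors_add_mset poly_shift_mult poly_shift_linear)

lemma poly_shift_linear_factors_initial:
  fixes x :: "nat \<Rightarrow> 'a::idom"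
  assumes "\<And>m. m < size S \<Longrightarrow> x m = 0"
  shows "poly_shift (linear_factors S) x 0 = x (size S)"
proof -
  have "poly_shift (linear_factors S) x 0 = (\<Sum>m\<le>size S. coeff (linear_factors S) m * x m)"
    using monic_linear_factors[of S] by (simp add: poly_shift_def)
  also have "\<dots> = x (size S)"
    using assms monic_linear_factors[of S] by (simp add: lessThan_Suc_atMost[symmetric])
  finally show ?thesis .
qed

lemma linear_factors_initial_value_solvable:
  fixes y :: "nat \<Rightarrow> 'a::idom"
  obtains x where "\<And>i. poly_shift (linear_factors S) x i = y i" "\<And>i. i < size S \<Longrightarrow> x i = 0"
proof (induction S arbitrary: y thesis)
  case empty
  then show ?case by simp
next
  case (add z S)
  define v where "v = rec_nat 0 (\<lambda>i vi. z * vi + y i)"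
  obtain x where x: "\<And>i. poly_shift (linear_factors S) x i = v i" "\<And>i. i < size S \<Longrightarrow> x i = 0"
    using add.IH[of v] by blast
  have "x (size S) = 0" using poly_shift_linear_factors_initial[of S x] x by (simp add: v_def)
  then have "x i = 0" if "i < size (add_mset z S)" for i using x(2) that less_Suc_eq by auto
  moreover have "poly_shift (linear_factors (add_mset z S)) x i = y i" for i
    by (simp only: poly_shift_linear_factors_add_mset x(1)) (simp add: v_def)
  ultimately show ?case using add.prems by blast
qed

lemma linear_factors_initial_value_unique:
  fixes x :: "nat \<Rightarrow> 'a::idom"
  assumes "\<And>i. poly_shift (linear_factors S) x i = 0" "\<And>i. i < size S \<Longrightarrow> x i = 0"
  shows "x i = 0"
  using assms
proof (induction S arbitrary: i)
  case (add z S)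
  define v where "v = poly_shift (linear_factors S) x"
  have "v 0 = 0" unfolding v_def using poly_shift_linear_factors_initial[of S x] add.prems(2) by simp
  moreover have "v (Suc j) = z * v j" for j
    using add.prems(1)[of j] by (simp only: poly_shift_linear_factors_add_mset v_def) simp
  ultimately have "v j = 0" for j by (induction j) simp_all
  then show ?case using add.IH add.prems(2) by (simp add: v_def)
qed simp

lemma linear_factors_outside_tendsto_zero_eq_zero:
  fixes y :: "nat \<Rightarrow> 'a::real_normed_field"
  assumes "\<forall>z\<in>#S. norm z \<ge> 1" "\<And>i. poly_shift (linear_factors S) y i = 0" "y \<longlonglongrightarrow> 0"
  shows "y i = 0"
  using assms
proof (induction S arbitrary: i)
  case (add z S)
  define v where "v = poly_shift (linear_factors S) y"
  have "v j = 0" for j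
  proof (rule geometric_tendsto_zero_eq_zero[of z])
    show "norm z \<ge> 1" using add.prems by simp
    show "v (Suc j) = z * v j" for j
      using add.prems(2)[of j] by (simp only: poly_shift_linear_factors_add_mset v_def) simp
    show "v \<longlonglongrightarrow> 0" unfolding v_def by (rule tendsto_poly_shift_zero[OF add.prems(3)])
  qed
  then show ?case using add.IH add.prems by (simp add: v_def)
qed simp

lemma linear_factors_outside_exp_decay_solvable:
  fixes f :: "nat \<Rightarrow> 'a::{real_normed_field, banach}"
  assumes "\<forall>z\<in>#S. norm z \<ge> 1" "exp_decay f"
  obtains y where "exp_decay y" "\<And>i. poly_shift (linear_factors S) y i = f i"
  using assms
proof (induction S arbitrary: f thesis)
  case (add z S)
  obtain v where v: "exp_decay v" "\<And>i. v (Suc i) - z * v i = f i"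
    using exp_decay_backward_solution[of z f] add.prems by auto
  obtain y where "exp_decay y" "\<And>i. poly_shift (linear_factors S) y i = v i"
    using add.IH[of v] add.prems v by auto
  then show ?case using add.prems(1) v by (simp only: poly_shift_linear_factors_add_mset)
qed simp

lemma linear_factors_inside_exp_decay:
  fixes x :: "nat \<Rightarrow> 'a::real_normed_field"
  assumes "\<forall>z\<in>#S. norm z < 1" "\<And>i. poly_shift (linear_factors S) x i = y i" "exp_decay y"
  shows "exp_decay x"
  using assms
proof (induction S arbitrary: y)
  case empty
  have "x = y" using empty.prems(2) by (intro ext) simp
  then show ?case using empty.prems(3) by (simp only:)
next
  case (add z S)
  define v where "v = poly_shift (linear_factors S) x"
  have "exp_decay v"
  proof (rule exp_decay_forward_recursion[of z y])
    show "norm z < 1" using add.prems(1) by simp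
    show "v (Suc i) - z * v i = y i" for i
      using add.prems(2)[of i] unfolding v_def by (simp only: poly_shift_linear_factors_add_mset)
  qed (rule add.prems(3))
  then show ?case using add.IH[of v] add.prems(1) by (simp add: v_def)
qed

lemma exp_decay_of_real_iff [simp]:
  "exp_decay (\<lambda>j. of_real (x j) :: 'a::real_normed_algebra_1) \<longleftrightarrow> exp_decay x"
  by (simp add: exp_decay_def)

lemma exp_decay_imp_exp_bound:
  assumes "exp_decay x"
  shows "\<exists>C \<delta>. \<delta> > 0 \<and> (\<forall>j. norm (x j) \<le> C * exp (- \<delta> * real j))"
proof -
  obtain C q where q: "0 < q" "q < 1" and b: "\<And>j. norm (x j) \<le> C * q ^ j"
    using assms unfolding exp_decay_def by blast
  have "q ^ j = exp (- (- ln q) * real j)" for j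
    using q exp_of_nat_mult[of j "ln q"] by (simp add: mult.commute)
  then show ?thesis using b q by (intro exI[of _ C] exI[of _ "- ln q"]) simp
qed

lemma poly_shift_split_unit_disc:
  fixes P :: "complex poly"
  assumes "P \<noteq> 0"
  shows "poly_shift P x i = lead_coeff P *
    poly_shift (linear_factors (filter_mset (\<lambda>z. \<not> norm z < 1) (proots P)))
      (poly_shift (linear_factors (filter_mset (\<lambda>z. norm z < 1) (proots P))) x) i"
proof -
  have "P = smult (lead_coeff P) (linear_factors (proots P))"
    using complex_poly_decompose_multiset[of P] by (simp add: linear_factors_def)
  also have "proots P = filter_mset (\<lambda>z. \<not> norm z < 1) (proots P) + filter_mset (\<lambda>z. norm z < 1) (proots P)"
    by (simp add: multiset_partition add.commute)
  finally show ?thesis by (metis linear_factors_union poly_shift_mult poly_shift_smult)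
qed

text \<open>A decaying solution of \<open>P(S) x = 0\<close> is killed by the factors with roots outside the
  unit disc and then decays exponentially through the factors with roots inside.\<close>

lemma poly_shift_eq_zero_exp_decay:
  fixes P :: "complex poly"
  assumes P: "P \<noteq> 0" and x: "\<And>i. poly_shift P x i = 0" "x \<longlonglongrightarrow> 0"
  shows "exp_decay x"
proof -
  let ?y = "poly_shift (linear_factors (filter_mset (\<lambda>z. norm z < 1) (proots P))) x"
  have "?y i = 0" for i
  proof (rule linear_factors_outside_tendsto_zero_eq_zero)
    show "poly_shift (linear_factors (filter_mset (\<lambda>z. \<not> norm z < 1) (proots P))) ?y i = 0" for i
      using x(1)[of i] P by (simp add: poly_shift_split_unit_disc)
  qed (auto intro: tendsto_poly_shift_zero x(2))
  then show ?thesis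
    by (intro linear_factors_inside_exp_decay[of _ x "\<lambda>_. 0"] exp_decay_zero) auto
qed

lemma poly_shift_eq_exp_decay_solvable:
  fixes P :: "complex poly"
  assumes P: "P \<noteq> 0" and f: "exp_decay f"
  obtains x where "exp_decay x" "\<And>i. poly_shift P x i = f i" "\<And>i. i < roots_in_disc 1 P \<Longrightarrow> x i = 0"
proof -
  let ?inside = "filter_mset (\<lambda>z. norm z < 1) (proots P)"
  let ?outside = "filter_mset (\<lambda>z. \<not> norm z < 1) (proots P)"
  have "exp_decay (\<lambda>i. f i / lead_coeff P)"
    using exp_decay_shift_scale[OF f, of "1 / lead_coeff P" 0] by simp
  moreover have "\<forall>z\<in>#?outside. norm z \<ge> 1" by auto
  ultimately obtain y where y: "exp_decay y"
    "\<And>i. poly_shift (linear_factors ?outside) y i = f i / lead_coeff P"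
    using linear_factors_outside_exp_decay_solvable by blast
  obtain x where x: "\<And>i. poly_shift (linear_factors ?inside) x i = y i" "\<And>i. i < size ?inside \<Longrightarrow> x i = 0"
    using linear_factors_initial_value_solvable by blast
  have "exp_decay x" using linear_factors_inside_exp_decay[OF _ x(1) y(1)] by simp
  moreover have "poly_shift (linear_factors ?inside) x = y" using x(1) by (intro ext) simp
  then have "poly_shift P x i = f i" for i using P y(2) by (simp add: poly_shift_split_unit_disc)
  ultimately show ?thesis using that x(2) size_proots_in_disc[OF P] by metis
qed

lemma poly_shift_eq_zero_initial_unique:
  fixes P :: "complex poly"
  assumes P: "P \<noteq> 0" and d: "\<And>i. poly_shift P d i = 0" "d \<longlonglongrightarrow> 0"
    and init: "\<And>i. i < roots_in_disc 1 P \<Longrightarrow> d i = 0"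
  shows "d i = 0"
proof (rule linear_factors_initial_value_unique)
  let ?y = "poly_shift (linear_factors (filter_mset (\<lambda>z. norm z < 1) (proots P))) d"
  show "?y i = 0" for i
  proof (rule linear_factors_outside_tendsto_zero_eq_zero)
    show "poly_shift (linear_factors (filter_mset (\<lambda>z. \<not> norm z < 1) (proots P))) ?y i = 0" for i
      using d(1)[of i] P by (simp add: poly_shift_split_unit_disc)
  qed (auto intro: tendsto_poly_shift_zero d(2))
  show "d i = 0" if "i < size (filter_mset (\<lambda>z. norm z < 1) (proots P))" for i
    using init that size_proots_in_disc[OF P] by simp
qed

lemma poly_shift_symbol_poly:
  "poly_shift (symbol_poly p r c) x i =
    (\<Sum>l\<in>{- int r..int p}. complex_of_real (c l) * x (nat (int (i + r) + l)))"
  unfolding symbol_poly_def poly_shift_sum poly_shift_monom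
  by (intro sum.cong refl) (auto intro!: arg_cong[where f=x])

lemma symbol_recurrence_homogeneous_unique:
  fixes d :: "nat \<Rightarrow> real"
  assumes cr: "c (- int r) \<noteq> 0" and roots: "roots_in_disc 1 (symbol_poly p r c) = r"
    and rec: "\<And>j. j \<ge> r \<Longrightarrow> (\<Sum>l\<in>{- int r..int p}. c l * d (nat (int j + l))) = 0"
    and init: "\<And>j. j < r \<Longrightarrow> d j = 0" and lim: "d \<longlonglongrightarrow> 0"
  shows "d j = 0"
proof -
  have "complex_of_real (d j) = 0"
  proof (rule poly_shift_eq_zero_initial_unique)
    show "symbol_poly p r c \<noteq> 0" using cr by (rule symbol_poly_nonzero)
    show "poly_shift (symbol_poly p r c) (\<lambda>j. complex_of_real (d j)) i = 0" for i
      using arg_cong[where f=complex_of_real, OF rec[of "i + r"]] by (simp add: poly_shift_symbol_poly)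
    show "(\<lambda>j. complex_of_real (d j)) \<longlonglongrightarrow> 0" using tendsto_of_real[OF lim] by simp
  qed (simp add: roots init)
  then show ?thesis by simp
qed

lemma symbol_recurrence_exp_decay_solution:
  fixes g :: "nat \<Rightarrow> real"
  assumes cr: "c (- int r) \<noteq> 0" and roots: "roots_in_disc 1 (symbol_poly p r c) = r"
    and g: "exp_decay g"
  defines "solves wt \<equiv> (\<forall>j\<ge>r. (\<Sum>l\<in>{- int r..int p}. c l * wt (nat (int j + l))) + g j = 0)
      \<and> (\<forall>j<r. wt j = 0) \<and> wt \<longlonglongrightarrow> 0"
  shows "(\<exists>!wt. solves wt) \<and>
    (\<forall>wt. solves wt \<longrightarrow> (\<exists>C \<delta>. \<delta> > 0 \<and> (\<forall>j. \<bar>wt j\<bar> \<le> C * exp (- \<delta> * real j))))"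
proof -
  let ?P = "symbol_poly p r c"
  have P: "?P \<noteq> 0" using cr by (rule symbol_poly_nonzero)
  have "exp_decay (\<lambda>i. - 1 * complex_of_real (g (i + r)))"
    using g by (intro exp_decay_shift_scale) simp
  then obtain x where x: "exp_decay x" "\<And>i. poly_shift ?P x i = - 1 * of_real (g (i + r))"
    and x0: "\<And>i. i < roots_in_disc 1 ?P \<Longrightarrow> x i = 0"
    using poly_shift_eq_exp_decay_solvable[OF P] by blast
  define wt where "wt = (\<lambda>j. Re (x j))"
  have decay: "exp_decay wt"
    using x(1) abs_Re_le_cmod order_trans unfolding exp_decay_def wt_def real_norm_def by metis
  moreover have "solves wt"
    unfolding solves_def
  proof (intro conjI allI impI)
    fix j assume "r \<le> j"
    then show "(\<Sum>l\<in>{- int r..int p}. c l * wt (nat (int j + l))) + g j = 0"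
      using arg_cong[where f=Re, OF x(2)[of "j - r"]] by (simp add: poly_shift_symbol_poly wt_def Re_sum)
  qed (use x0[unfolded roots] exp_decay_imp_tendsto_zero[OF \<open>exp_decay wt\<close>] in \<open>simp_all add: wt_def\<close>)
  moreover have "wt' = wt" if wt': "solves wt'" for wt'
  proof -
    have rec: "(\<Sum>l\<in>{- int r..int p}. c l * y (nat (int j + l))) = - g j"
      if "solves y" "j \<ge> r" for y j
      using that unfolding solves_def by (simp add: eq_neg_iff_add_eq_0)
    have "wt' j - wt j = 0" for j
    proof (rule symbol_recurrence_homogeneous_unique[OF cr roots])
      show "(\<Sum>l\<in>{- int r..int p}. c l * (wt' (nat (int j + l)) - wt (nat (int j + l)))) = 0"
        if "j \<ge> r" for j
        using rec[OF wt' that] rec[OF \<open>solves wt\<close> that] by (simp add: right_diff_distrib sum_subtractf)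
      show "(\<lambda>j. wt' j - wt j) \<longlonglongrightarrow> 0"
        using \<open>solves wt\<close> wt' tendsto_diff unfolding solves_def by fastforce
    qed (use \<open>solves wt\<close> wt' in \<open>simp add: solves_def\<close>)
    then show ?thesis by auto
  qed
  moreover have "\<exists>C \<delta>. \<delta> > 0 \<and> (\<forall>j. \<bar>wt j\<bar> \<le> C * exp (- \<delta> * real j))"
    using exp_decay_imp_exp_bound[OF decay] by simp
  ultimately show ?thesis by blast
qed

theorem lemma2p8:
  fixes a lam :: real and p r k :: nat and c :: "int \<Rightarrow> real"
    and alpha beta :: "nat \<Rightarrow> real" and w :: "nat \<Rightarrow> real"
  assumes a_nz: "a \<noteq> 0" and a_neg: "a < 0"
    and c_first: "c (- int r) \<noteq> 0" and c_last: "c (int p) \<noteq> 0"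
    and k_pos: "k \<ge> 1" and alpha_k: "alpha k = 1"
    and alpha_beta_0: "\<bar>alpha 0\<bar> + \<bar>beta 0\<bar> > 0"
    and lam_pos: "lam > 0"
    and A1a: "(\<Sum>l\<in>{- int r..int p}. c l) = 0"
    and A1b: "(\<Sum>l\<in>{- int r..int p}. of_int l * c l) = a"
    and A2a: "(\<Sum>s\<le>k. alpha s) = 0"
    and A2b: "(\<Sum>s\<le>k. of_nat s * alpha s) = (\<Sum>s<k. beta s)"
    and A3: "l2_stable p r c k alpha beta lam"
    and A4: "\<forall>\<theta>\<in>{-pi..pi} - {0}. symbolA p r c (cis \<theta>) \<noteq> 0"
    and w_init: "\<forall>j<r. w j = -1"
    and w_rec: "\<forall>j::nat. (\<Sum>l\<in>{- int r..int p}. c l * w (nat (int j + l + int r))) = 0"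
    and w_lim: "w \<longlonglongrightarrow> 0"
  shows "(\<exists>!wt :: nat \<Rightarrow> real.
            (\<forall>j\<ge>r. (\<Sum>l\<in>{- int r..int p}. c l * wt (nat (int j + l))) + w j = 0)
          \<and> (\<forall>j<r. wt j = 0)
          \<and> wt \<longlonglongrightarrow> 0)
       \<and> (\<forall>wt :: nat \<Rightarrow> real.
            ((\<forall>j\<ge>r. (\<Sum>l\<in>{- int r..int p}. c l * wt (nat (int j + l))) + w j = 0)
          \<and> (\<forall>j<r. wt j = 0)
          \<and> wt \<longlonglongrightarrow> 0)
          \<longrightarrow> (\<exists>C \<delta>. \<delta> > 0 \<and> (\<forall>j. \<bar>wt j\<bar> \<le> C * exp (- \<delta> * real j))))"
proof -
  have roots: "roots_in_disc 1 (symbol_poly p r c) = r"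
    using symbol_poly_roots_in_unit_disc[OF k_pos alpha_k lam_pos A3 c_first a_neg A1a A1b A2a A2b A4] .
  have "exp_decay (\<lambda>j. complex_of_real (w j))"
  proof (rule poly_shift_eq_zero_exp_decay)
    show "symbol_poly p r c \<noteq> 0" using c_first by (rule symbol_poly_nonzero)
    show "poly_shift (symbol_poly p r c) (\<lambda>j. of_real (w j)) i = 0" for i
      using arg_cong[where f=complex_of_real, OF w_rec[rule_format, of i]]
      by (simp add: poly_shift_symbol_poly add_ac)
    show "(\<lambda>j. complex_of_real (w j)) \<longlonglongrightarrow> 0" using tendsto_of_real[OF w_lim] by simp
  qed
  then have "exp_decay w" by simp
  then show ?thesis by (rule symbol_recurrence_exp_decay_solution[OF c_first roots])
qed

end
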